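(* Let $\mathcal{H}$ be a complex Hilbert space, let $T_1,T_2\in\mathcal{B}(\mathcal{H})$ be contractions and let $Q\in\mathcal{B}(\mathcal{H})$ be a unitary such that $T_2T_1=T_1T_2Q$. Then there exist a Hilbert space $\mathcal{K}\supseteq\mathcal{H}$, co-isometries $W_1,W_2\in\mathcal{B}(\mathcal{K})$ and a unitary $\overline{Q}\in\mathcal{B}(\mathcal{K})$, with $\mathcal{H}$ reducing $\overline{Q}$ and $\overline{Q}|_{\mathcal{H}}=Q$, such that (i) $W_2W_1=W_1W_2\overline{Q}$; and (ii) $W_i$ is an extension of $T_i$ for $i=1,2$, so that $T_1^nT_2^m=P_{\mathcal{H}}W_1^nW_2^m|_{\mathcal{H}}$ and $T_2^nT_1^m=P_{\mathcal{H}}W_2^nW_1^m|_{\mathcal{H}}$ for all integers $n,m\geq 0$. In fact, given any $q\in\mathbb{T}$, one can choose $\overline{Q}=Q\oplus qI_{\mathcal{K}\ominus\mathcal{H}}$.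
   Context: $S\in\mathcal{B}(\mathcal{K})$ is an extension of $T\in\mathcal{B}(\mathcal{H})$ ($\mathcal{H}\subseteq\mathcal{K}$) if $Sh=Th$ for all $h\in\mathcal{H}$. A co-isometry is $W$ with $WW^*=I$. $\mathbb{T}$ is the unit circle; $P_{\mathcal{H}}$ the orthogonal projection onto $\mathcal{H}$. *)

theory Defs
  imports "HOL-Analysis.Analysis"
begin

text \<open>A complex Hilbert space is modelled as a real Hilbert space (real inner product,
  complete) together with a complex structure: multiplication by the imaginary unit,
  a real-linear orthogonal map whose square is minus the identity.  The real inner
  product is the real part of the complex inner product.\<close>

class complex_hilbert = real_inner + complete_space +
  fixes iunit :: "'a \<Rightarrow> 'a"
  assumes iunit_add: "iunit (x + y) = iunit x + iunit y"
    and iunit_scaleR: "iunit (scaleR r x) = scaleR r (iunit x)"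
    and iunit_iunit: "iunit (iunit x) = - x"
    and inner_iunit: "inner (iunit x) (iunit y) = inner x y"

definition cscale :: "complex \<Rightarrow> 'a::complex_hilbert \<Rightarrow> 'a" where
  "cscale c x = scaleR (Re c) x + scaleR (Im c) (iunit x)"

text \<open>complex inner product (conjugate-linear in the first, linear in the second argument)\<close>
definition cinner :: "'a::complex_hilbert \<Rightarrow> 'a \<Rightarrow> complex" where
  "cinner x y = Complex (inner x y) (inner (iunit x) y)"

definition bop :: "('a::complex_hilbert \<Rightarrow> 'a) \<Rightarrow> bool" where
  "bop T \<longleftrightarrow> bounded_linear T \<and> (\<forall>x. T (iunit x) = iunit (T x))"

definition is_adj :: "('a::complex_hilbert \<Rightarrow> 'a) \<Rightarrow> ('a \<Rightarrow> 'a) \<Rightarrow> bool" where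
  "is_adj T A \<longleftrightarrow> (\<forall>x y. cinner (T x) y = cinner x (A y))"

definition contraction :: "('a::complex_hilbert \<Rightarrow> 'a) \<Rightarrow> bool" where
  "contraction T \<longleftrightarrow> bop T \<and> (\<forall>x. norm (T x) \<le> norm x)"

definition unitary_op :: "('a::complex_hilbert \<Rightarrow> 'a) \<Rightarrow> bool" where
  "unitary_op U \<longleftrightarrow> bop U \<and> (\<exists>A. bop A \<and> is_adj U A \<and> (\<forall>x. A (U x) = x) \<and> (\<forall>x. U (A x) = x))"

text \<open>H is identified with the first coordinate of l2(N,H) via emb.\<close>

definition l2 :: "(nat \<Rightarrow> 'a::complex_hilbert) set" where
  "l2 = {f. summable (\<lambda>n. (norm (f n))\<^sup>2)}"

definition l2cinner :: "(nat \<Rightarrow> 'a::complex_hilbert) \<Rightarrow> (nat \<Rightarrow> 'a) \<Rightarrow> complex" where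
  "l2cinner f g = (\<Sum>n. cinner (f n) (g n))"

definition l2norm :: "(nat \<Rightarrow> 'a::complex_hilbert) \<Rightarrow> real" where
  "l2norm f = sqrt (\<Sum>n. (norm (f n))\<^sup>2)"

definition l2add :: "(nat \<Rightarrow> 'a::complex_hilbert) \<Rightarrow> (nat \<Rightarrow> 'a) \<Rightarrow> nat \<Rightarrow> 'a" where
  "l2add f g = (\<lambda>n. f n + g n)"

definition l2diff :: "(nat \<Rightarrow> 'a::complex_hilbert) \<Rightarrow> (nat \<Rightarrow> 'a) \<Rightarrow> nat \<Rightarrow> 'a" where
  "l2diff f g = (\<lambda>n. f n - g n)"

definition l2scale :: "complex \<Rightarrow> (nat \<Rightarrow> 'a::complex_hilbert) \<Rightarrow> nat \<Rightarrow> 'a" where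
  "l2scale c f = (\<lambda>n. cscale c (f n))"

definition closed_csubspace :: "(nat \<Rightarrow> 'a::complex_hilbert) set \<Rightarrow> bool" where
  "closed_csubspace K \<longleftrightarrow> K \<subseteq> l2 \<and> (\<lambda>n. 0) \<in> K
     \<and> (\<forall>x\<in>K. \<forall>y\<in>K. l2add x y \<in> K) \<and> (\<forall>c. \<forall>x\<in>K. l2scale c x \<in> K)
     \<and> (\<forall>X L. (\<forall>n. X n \<in> K) \<and> L \<in> l2 \<and> (\<lambda>n. l2norm (l2diff (X n) L)) \<longlonglongrightarrow> 0 \<longrightarrow> L \<in> K)"

definition bop_on :: "(nat \<Rightarrow> 'a::complex_hilbert) set \<Rightarrow> ((nat \<Rightarrow> 'a) \<Rightarrow> (nat \<Rightarrow> 'a)) \<Rightarrow> bool" where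
  "bop_on K W \<longleftrightarrow> (\<forall>x\<in>K. W x \<in> K)
     \<and> (\<forall>x\<in>K. \<forall>y\<in>K. W (l2add x y) = l2add (W x) (W y))
     \<and> (\<forall>c. \<forall>x\<in>K. W (l2scale c x) = l2scale c (W x))
     \<and> (\<exists>C. \<forall>x\<in>K. l2norm (W x) \<le> C * l2norm x)"

definition is_adj_on :: "(nat \<Rightarrow> 'a::complex_hilbert) set \<Rightarrow> ((nat \<Rightarrow> 'a) \<Rightarrow> (nat \<Rightarrow> 'a)) \<Rightarrow> ((nat \<Rightarrow> 'a) \<Rightarrow> (nat \<Rightarrow> 'a)) \<Rightarrow> bool" where
  "is_adj_on K W A \<longleftrightarrow> bop_on K A \<and> (\<forall>x\<in>K. \<forall>y\<in>K. l2cinner (W x) y = l2cinner x (A y))"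

definition coisometry_on :: "(nat \<Rightarrow> 'a::complex_hilbert) set \<Rightarrow> ((nat \<Rightarrow> 'a) \<Rightarrow> (nat \<Rightarrow> 'a)) \<Rightarrow> bool" where
  "coisometry_on K W \<longleftrightarrow> bop_on K W \<and> (\<exists>A. is_adj_on K W A \<and> (\<forall>y\<in>K. W (A y) = y))"

definition unitary_on :: "(nat \<Rightarrow> 'a::complex_hilbert) set \<Rightarrow> ((nat \<Rightarrow> 'a) \<Rightarrow> (nat \<Rightarrow> 'a)) \<Rightarrow> bool" where
  "unitary_on K U \<longleftrightarrow> bop_on K U \<and> (\<exists>A. is_adj_on K U A \<and> (\<forall>y\<in>K. U (A y) = y) \<and> (\<forall>x\<in>K. A (U x) = x))"

definition emb :: "'a::complex_hilbert \<Rightarrow> nat \<Rightarrow> 'a" where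
  "emb h = (\<lambda>n. if n = 0 then h else 0)"

definition PH :: "(nat \<Rightarrow> 'a::complex_hilbert) \<Rightarrow> nat \<Rightarrow> 'a" where
  "PH x = emb (x 0)"

definition orth_in :: "(nat \<Rightarrow> 'a::complex_hilbert) set \<Rightarrow> (nat \<Rightarrow> 'a) set \<Rightarrow> (nat \<Rightarrow> 'a) set" where
  "orth_in K M = {x\<in>K. \<forall>y\<in>M. l2cinner y x = 0}"

definition reduces_on :: "(nat \<Rightarrow> 'a::complex_hilbert) set \<Rightarrow> (nat \<Rightarrow> 'a) set \<Rightarrow> ((nat \<Rightarrow> 'a) \<Rightarrow> (nat \<Rightarrow> 'a)) \<Rightarrow> bool" where
  "reduces_on K M U \<longleftrightarrow> (\<forall>x\<in>M. U x \<in> M) \<and> (\<forall>x\<in>orth_in K M. U x \<in> orth_in K M)"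

end

theory Submission
  imports Defs "HOL-Computational_Algebra.Formal_Power_Series"
begin

text \<open>The dilation space is \<open>\<ell>\<^sup>2(\<nat>, H)\<close>, with \<open>H\<close> as the zeroth coordinate.  Each
  contraction \<open>T\<^sub>i\<close> has a co-isometric extension \<open>V\<^sub>i y = (T\<^sub>i y\<^sub>0 + D\<^sub>i y\<^sub>1, y\<^sub>3, y\<^sub>4, \<dots>)\<close>,
  built from its defect operator \<open>D\<^sub>i = (I - T\<^sub>i T\<^sub>i\<^sup>*)\<^sup>1\<^sup>/\<^sup>2\<close>.  These need not satisfy the twisted
  relation, but \<open>T\<^sub>2 T\<^sub>1 = T\<^sub>1 T\<^sub>2 Q\<close> with \<open>Q\<close> unitary gives
  \<open>\<parallel>T\<^sub>1\<^sup>* T\<^sub>2\<^sup>* h\<parallel> = \<parallel>T\<^sub>2\<^sup>* T\<^sub>1\<^sup>* h\<parallel>\<close>, hence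
  \<open>\<parallel>D\<^sub>1 T\<^sub>2\<^sup>* h\<parallel>\<^sup>2 + \<parallel>D\<^sub>2 h\<parallel>\<^sup>2 = \<parallel>D\<^sub>2 T\<^sub>1\<^sup>* h\<parallel>\<^sup>2 + \<parallel>D\<^sub>1 h\<parallel>\<^sup>2\<close>.  So
  \<open>(D\<^sub>1 T\<^sub>2\<^sup>* h, D\<^sub>2 h) \<mapsto> (D\<^sub>2 T\<^sub>1\<^sup>* h, D\<^sub>1 h)\<close> is a well-defined isometry; it extends to a
  partial isometry of \<open>H \<oplus> H\<close> and then, by Halmos' construction, to a unitary \<open>G\<close> of
  \<open>(H \<oplus> H) \<oplus> (H \<oplus> H)\<close>.  Let \<open>\<Gamma>\<close> act on the \<open>k\<close>-th block of four coordinates by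
  \<open>(cnj q)\<^sup>k\<^sup>+\<^sup>1 G\<close>.  Then \<open>W\<^sub>1 = V\<^sub>1 \<Gamma>\<^sup>*\<close> and \<open>W\<^sub>2 = \<Gamma> V\<^sub>2\<close> are co-isometries extending
  \<open>T\<^sub>1, T\<^sub>2\<close>, and \<open>W\<^sub>2 W\<^sub>1 = W\<^sub>1 W\<^sub>2 (Q \<oplus> q I)\<close>.\<close>

section \<open>Complex Hilbert spaces\<close>

subclass (in complex_hilbert) banach ..

lemma iunit_zero [simp]: "iunit (0::'a::complex_hilbert) = 0"
  using iunit_scaleR[of 0 "0::'a"] by simp

lemma iunit_uminus [simp]: "iunit (- x::'a::complex_hilbert) = - iunit x"
  using iunit_scaleR[of "-1" x] by simp

lemma iunit_diff: "iunit (x - y::'a::complex_hilbert) = iunit x - iunit y"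
  using iunit_add[of x "-y"] by simp

lemma norm_iunit [simp]: "norm (iunit (x::'a::complex_hilbert)) = norm x"
  by (simp add: norm_eq_sqrt_inner inner_iunit)

lemma bounded_linear_iunit: "bounded_linear (iunit :: 'a::complex_hilbert \<Rightarrow> 'a)"
  by (rule bounded_linear_intro[where K=1]) (simp_all add: iunit_add iunit_scaleR)

lemma inner_iunit_left: "inner (iunit x) (y::'a::complex_hilbert) = - inner x (iunit y)"
  using inner_iunit[of "iunit x" y] by (simp add: iunit_iunit)

lemma inner_iunit_right: "inner x (iunit (y::'a::complex_hilbert)) = - inner (iunit x) y"
  by (simp add: inner_iunit_left)

lemma cscale_add_right: "cscale c (x + y) = cscale c x + cscale c (y::'a::complex_hilbert)"
  by (simp add: cscale_def iunit_add scaleR_add_right)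

lemma cscale_zero_right [simp]: "cscale c (0::'a::complex_hilbert) = 0"
  by (simp add: cscale_def)

lemma cscale_one [simp]: "cscale 1 (x::'a::complex_hilbert) = x"
  by (simp add: cscale_def)

lemma cscale_mult: "cscale a (cscale b x) = cscale (a * b) (x::'a::complex_hilbert)"
  by (simp add: cscale_def iunit_add iunit_scaleR iunit_iunit algebra_simps)

lemma norm_cscale [simp]: "norm (cscale c (x::'a::complex_hilbert)) = cmod c * norm x"
proof -
  have "(norm (cscale c x))\<^sup>2 = (Re c)\<^sup>2 * (norm x)\<^sup>2 + (Im c)\<^sup>2 * (norm x)\<^sup>2"
    unfolding cscale_def power2_norm_eq_inner
    by (simp add: inner_iunit inner_iunit_left iunit_iunit
        power2_eq_square algebra_simps)
  also have "\<dots> = (cmod c * norm x)\<^sup>2"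
    by (simp add: cmod_def algebra_simps)
  finally show ?thesis by simp
qed

lemma cinner_add_left: "cinner (x + y) z = cinner x z + cinner y (z::'a::complex_hilbert)"
  by (simp add: cinner_def iunit_add inner_add_left complex_eq_iff)

lemma cinner_zero_left [simp]: "cinner 0 (x::'a::complex_hilbert) = 0"
  by (simp add: cinner_def complex_eq_iff)

lemma cinner_zero_right [simp]: "cinner x (0::'a::complex_hilbert) = 0"
  by (simp add: cinner_def complex_eq_iff)

lemma cinner_cscale_left: "cinner (cscale c x) y = cnj c * cinner x (y::'a::complex_hilbert)"
  by (simp add: cinner_def cscale_def complex_eq_iff iunit_add iunit_scaleR
      iunit_iunit algebra_simps)

lemma cinner_cscale_right: "cinner x (cscale c y) = c * cinner x (y::'a::complex_hilbert)"
  by (simp add: cinner_def cscale_def complex_eq_iff inner_iunit_right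
      iunit_iunit algebra_simps)

lemma cinner_self_eq_zero_iff: "cinner x x = 0 \<longleftrightarrow> (x::'a::complex_hilbert) = 0"
  using inner_iunit_left[of x x] by (simp add: cinner_def complex_eq_iff inner_commute)

lemma cnj_sgn_mult: "cnj (sgn z) * z = complex_of_real (cmod z)"
proof (cases "z = 0")
  case False
  have "cnj z * z = complex_of_real ((cmod z)\<^sup>2)"
    using complex_norm_square[of z] by (simp add: mult.commute)
  then show ?thesis
    using False by (simp add: sgn_div_norm scaleR_conv_of_real power2_eq_square field_simps)
qed simp

lemma cmod_cinner_le: "cmod (cinner x (y::'a::complex_hilbert)) \<le> norm x * norm y"
proof -
  define u where "u = sgn (cinner x y)"
  have "cmod (cinner x y) = Re (cinner (cscale u x) y)"
    by (simp add: u_def cinner_cscale_left cnj_sgn_mult)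
  also have "\<dots> = inner (cscale u x) y" by (simp add: cinner_def)
  also have "\<dots> \<le> norm (cscale u x) * norm y" by (rule norm_cauchy_schwarz)
  also have "\<dots> \<le> norm x * norm y"
    by (simp add: u_def norm_sgn mult_left_le_one_le mult_right_le_one_le)
  finally show ?thesis .
qed

instantiation prod :: (complex_hilbert, complex_hilbert) complex_hilbert
begin
definition iunit_prod_def: "iunit x = (iunit (fst x), iunit (snd x))"
instance
  by standard (auto simp: iunit_prod_def iunit_add iunit_scaleR iunit_iunit inner_iunit
      inner_prod_def)
end

lemma iunit_Pair [simp]: "iunit (a, b) = (iunit a, iunit b)"
  by (simp add: iunit_prod_def)

lemma cscale_Pair [simp]: "cscale c (a, b) = (cscale c a, cscale c b)"
  by (simp add: cscale_def)

lemma fst_cscale: "fst (cscale c p) = cscale c (fst p)"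
  by (simp add: cscale_def iunit_prod_def)

lemma snd_cscale: "snd (cscale c p) = cscale c (snd p)"
  by (simp add: cscale_def iunit_prod_def)

lemma cinner_Pair [simp]: "cinner (a, b) (c, d) = cinner a c + cinner b d"
  by (simp add: cinner_def complex_eq_iff)

lemma bop_iunit: "bop T \<Longrightarrow> T (iunit x) = iunit (T x)"
  by (simp add: bop_def)

lemma bop_cscale: "bop T \<Longrightarrow> T (cscale c x) = cscale c (T x)"
  by (simp add: bop_def cscale_def linear_add linear_scale bounded_linear.linear)

lemma bop_comp: "bop S \<Longrightarrow> bop T \<Longrightarrow> bop (\<lambda>x. S (T x))"
  unfolding bop_def using bounded_linear_compose[of S T] by (auto simp: o_def)

lemma is_adj_iff_inner:
  assumes "bop T"
  shows "is_adj T A \<longleftrightarrow> (\<forall>x y. inner (T x) y = inner x (A y))"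
proof
  assume "is_adj T A"
  then show "\<forall>x y. inner (T x) y = inner x (A y)"
    by (auto simp: is_adj_def cinner_def complex_eq_iff)
next
  assume adj: "\<forall>x y. inner (T x) y = inner x (A y)"
  have "inner (iunit (T x)) y = inner (iunit x) (A y)" for x y
    using adj bop_iunit[OF assms, of x] by metis
  then show "is_adj T A" using adj unfolding is_adj_def cinner_def by simp
qed

lemma cinner_adjoint_if_inner:
  assumes "bop T" and "\<And>x y. inner (T x) y = inner x (A y)"
  shows "cinner (T x) y = cinner x (A y)"
proof -
  have "is_adj T A" using is_adj_iff_inner[OF assms(1)] assms(2) by blast
  then show ?thesis unfolding is_adj_def by blast
qed

section \<open>Orthogonal projections and adjoints\<close>

lemma parallelogram_law:
  fixes a b :: "'a::real_inner"
  shows "(norm (a + b))\<^sup>2 + (norm (a - b))\<^sup>2 = 2 * (norm a)\<^sup>2 + 2 * (norm b)\<^sup>2"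
  unfolding power2_norm_eq_inner
  by (simp add: inner_add_left inner_add_right inner_diff_left inner_diff_right inner_commute)

lemma Cauchy_if_dist_le_null:
  fixes s :: "nat \<Rightarrow> 'a::metric_space"
  assumes "e \<longlonglongrightarrow> 0" and "\<And>N j k. N \<le> j \<Longrightarrow> N \<le> k \<Longrightarrow> dist (s j) (s k) \<le> e N"
  shows "Cauchy s"
proof (rule metric_CauchyI)
  fix \<epsilon> :: real
  assume "\<epsilon> > 0"
  then obtain N where "e N < \<epsilon>"
    using order_tendstoD(2)[OF assms(1)] by (auto simp: eventually_sequentially)
  then show "\<exists>N. \<forall>j\<ge>N. \<forall>k\<ge>N. dist (s j) (s k) < \<epsilon>"
    using assms(2) by (meson le_less_trans)
qed

lemma near_minimisers_close:
  fixes M :: "'a::real_inner set"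
  assumes "subspace M" and "a \<in> M" and "b \<in> M" and d_le: "\<And>m. m \<in> M \<Longrightarrow> d \<le> (norm (x - m))\<^sup>2"
  shows "(norm (a - b))\<^sup>2 \<le> 2 * ((norm (x - a))\<^sup>2 - d) + 2 * ((norm (x - b))\<^sup>2 - d)"
proof -
  have "scaleR (1/2) (a + b) \<in> M"
    using assms by (simp add: subspace_add subspace_scale)
  then have "4 * d \<le> (norm (scaleR 2 (x - scaleR (1/2) (a + b))))\<^sup>2"
    using d_le by (simp add: power_mult_distrib)
  also have "scaleR 2 (x - scaleR (1/2) (a + b)) = (x - a) + (x - b)"
    by (simp add: algebra_simps scaleR_2)
  finally show ?thesis
    using parallelogram_law[of "x - a" "x - b"] by (simp add: norm_minus_commute[of b a])
qed

lemma nearest_point_exists: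
  fixes M :: "'a::{real_inner,complete_space} set"
  assumes sub: "subspace M" and cl: "closed M"
  obtains p where "p \<in> M" and "\<And>m. m \<in> M \<Longrightarrow> norm (x - p) \<le> norm (x - m)"
proof -
  define d where "d = Inf ((\<lambda>m. (norm (x - m))\<^sup>2) ` M)"
  define \<epsilon> :: "nat \<Rightarrow> real" where "\<epsilon> n = inverse (real (Suc n))" for n
  have bdd: "bdd_below ((\<lambda>m. (norm (x - m))\<^sup>2) ` M)"
    by (rule bdd_belowI[of _ 0]) auto
  have d_le: "d \<le> (norm (x - m))\<^sup>2" if "m \<in> M" for m
    unfolding d_def using bdd that by (simp add: cInf_lower)
  have "\<exists>m\<in>M. (norm (x - m))\<^sup>2 < d + \<epsilon> n" for n
    using cInf_less_iff[OF _ bdd, of "d + \<epsilon> n"] subspace_0[OF sub]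
    by (auto simp: d_def \<epsilon>_def)
  then obtain s where sM: "\<And>n. s n \<in> M" and s_close: "\<And>n. (norm (x - s n))\<^sup>2 < d + \<epsilon> n"
    by metis
  have \<epsilon>_mono: "\<epsilon> j \<le> \<epsilon> N" if "N \<le> j" for N j
    using that by (simp add: \<epsilon>_def le_imp_inverse_le)
  have dist_s: "dist (s j) (s k) \<le> sqrt (4 * \<epsilon> N)" if "N \<le> j" "N \<le> k" for N j k
  proof -
    have "(norm (s j - s k))\<^sup>2 \<le> 2 * \<epsilon> j + 2 * \<epsilon> k"
      using near_minimisers_close[OF sub sM sM d_le, of j k] s_close[of j] s_close[of k] by simp
    also have "\<dots> \<le> 4 * \<epsilon> N" using \<epsilon>_mono[OF that(1)] \<epsilon>_mono[OF that(2)] by simp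
    finally show ?thesis by (simp add: dist_norm real_le_rsqrt)
  qed
  have "(\<lambda>N. sqrt (4 * \<epsilon> N)) \<longlonglongrightarrow> sqrt (4 * 0)"
    unfolding \<epsilon>_def by (intro tendsto_intros LIMSEQ_inverse_real_of_nat)
  then have "Cauchy s"
    using dist_s by (intro Cauchy_if_dist_le_null[of "\<lambda>N. sqrt (4 * \<epsilon> N)"]) simp_all
  then obtain p where sp: "s \<longlonglongrightarrow> p" using Cauchy_convergent_iff convergent_def by blast
  have "p \<in> M" using cl sM sp closed_sequentially by blast
  have "(\<lambda>n. (norm (x - s n))\<^sup>2) \<longlonglongrightarrow> (norm (x - p))\<^sup>2"
    by (intro tendsto_intros sp)
  moreover have "(\<lambda>n. d + \<epsilon> n) \<longlonglongrightarrow> d + 0"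
    unfolding \<epsilon>_def by (intro tendsto_intros LIMSEQ_inverse_real_of_nat)
  ultimately have "(norm (x - p))\<^sup>2 \<le> d"
    using s_close by (auto intro: LIMSEQ_le less_imp_le)
  then have "norm (x - p) \<le> norm (x - m)" if "m \<in> M" for m
    using d_le[OF that] by (simp add: power2_le_imp_le)
  with \<open>p \<in> M\<close> show ?thesis by (rule that)
qed

lemma nearest_point_orthogonal:
  fixes M :: "'a::real_inner set"
  assumes sub: "subspace M" and "p \<in> M" and near: "\<And>m. m \<in> M \<Longrightarrow> norm (x - p) \<le> norm (x - m)"
    and "m \<in> M"
  shows "inner (x - p) m = 0"
proof (cases "m = 0")
  case False
  define c where "c = inner (x - p) m"
  define t where "t = c / inner m m"
  have "p + scaleR t m \<in> M" using assms sub by (simp add: subspace_add subspace_scale)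
  then have "(norm (x - p))\<^sup>2 \<le> (norm (x - (p + scaleR t m)))\<^sup>2"
    using near by (simp add: power_mono)
  also have "\<dots> = (norm (x - p))\<^sup>2 - c * c / inner m m"
    unfolding power2_norm_eq_inner c_def t_def using False
    by (simp add: inner_diff_left inner_diff_right inner_add_left inner_add_right inner_commute
        power2_eq_square field_simps)
  finally have "c * c / inner m m \<le> 0" by simp
  moreover have "inner m m > 0" using False by simp
  ultimately have "c * c \<le> 0" by (auto simp: divide_le_0_iff)
  then show ?thesis by (auto simp: c_def mult_le_0_iff)
qed simp

definition proj :: "'a::real_inner set \<Rightarrow> 'a \<Rightarrow> 'a" where
  "proj M x = (SOME p. p \<in> M \<and> (\<forall>m\<in>M. inner (x - p) m = 0))"

locale closed_linear_subspace =
  fixes M :: "'a::{real_inner,complete_space} set"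
  assumes subspace: "subspace M" and closed: "closed M"
begin

lemma proj_in: "proj M x \<in> M" and proj_orth: "m \<in> M \<Longrightarrow> inner (x - proj M x) m = 0"
proof -
  obtain p where "p \<in> M" "\<And>m. m \<in> M \<Longrightarrow> norm (x - p) \<le> norm (x - m)"
    using nearest_point_exists[OF subspace closed, where x=x] by blast
  then have "\<exists>p. p \<in> M \<and> (\<forall>m\<in>M. inner (x - p) m = 0)"
    using nearest_point_orthogonal[OF subspace] by blast
  then have "proj M x \<in> M \<and> (\<forall>m\<in>M. inner (x - proj M x) m = 0)"
    unfolding proj_def by (rule someI_ex)
  then show "proj M x \<in> M" and "m \<in> M \<Longrightarrow> inner (x - proj M x) m = 0" by auto
qed

lemma proj_unique:
  assumes "p \<in> M" and "\<And>m. m \<in> M \<Longrightarrow> inner (x - p) m = 0"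
  shows "proj M x = p"
proof -
  have d: "proj M x - p \<in> M" using assms(1) proj_in subspace by (simp add: subspace_diff)
  have "inner (proj M x - p) (proj M x - p)
      = inner (x - p) (proj M x - p) - inner (x - proj M x) (proj M x - p)"
    by (simp add: inner_diff_left)
  also have "\<dots> = 0" using assms(2)[OF d] proj_orth[OF d] by simp
  finally show ?thesis by simp
qed

lemma proj_id: "x \<in> M \<Longrightarrow> proj M x = x"
  by (rule proj_unique) auto

lemma proj_proj: "proj M (proj M x) = proj M x"
  by (rule proj_id[OF proj_in])

lemma proj_add: "proj M (x + y) = proj M x + proj M y"
  by (rule proj_unique)
    (auto simp: subspace_add[OF subspace] proj_in proj_orth[unfolded inner_diff_left]
      algebra_simps simp flip: diff_diff_eq2)

lemma proj_scaleR: "proj M (scaleR r x) = scaleR r (proj M x)"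
proof (rule proj_unique)
  show "scaleR r (proj M x) \<in> M" using subspace proj_in by (simp add: subspace_scale)
  show "inner (scaleR r x - scaleR r (proj M x)) m = 0" if "m \<in> M" for m
    using proj_orth[OF that, of x] by (simp flip: scaleR_diff_right)
qed

lemma inner_proj_proj: "inner (proj M x) (proj M y) = inner (proj M x) y"
  using proj_orth[OF proj_in, of y x] inner_commute[of "y - proj M y" "proj M x"]
  by (simp add: inner_diff_right)

lemma norm_proj_le: "norm (proj M x) \<le> norm x"
proof -
  have "(norm x)\<^sup>2 = (norm (proj M x))\<^sup>2 + (norm (x - proj M x))\<^sup>2"
    using inner_proj_proj[of x x] unfolding power2_norm_eq_inner
    by (simp add: inner_diff_left inner_diff_right inner_commute)
  then show ?thesis by (simp add: power2_le_imp_le)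
qed

end

lemma proj_iunit:
  fixes M :: "'a::complex_hilbert set"
  assumes "closed_linear_subspace M" and iunit_M: "\<And>m. m \<in> M \<Longrightarrow> iunit m \<in> M"
  shows "proj M (iunit x) = iunit (proj M x)"
proof -
  interpret closed_linear_subspace M by fact
  show ?thesis
  proof (rule proj_unique)
    show "iunit (proj M x) \<in> M" using iunit_M proj_in by blast
    show "inner (iunit x - iunit (proj M x)) m = 0" if "m \<in> M" for m
      using proj_orth[OF iunit_M[OF that], of x] by (simp flip: iunit_diff add: inner_iunit_left)
  qed
qed

lemma riesz_representation:
  fixes f :: "'a::{real_inner,complete_space} \<Rightarrow> real"
  assumes "bounded_linear f"
  shows "\<exists>y. \<forall>x. f x = inner y x"
proof (cases "\<forall>x. f x = 0")
  case True
  then show ?thesis by (intro exI[of _ 0]) simp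
next
  case False
  then obtain z where z: "f z \<noteq> 0" by blast
  interpret f: bounded_linear f by fact
  define N where "N = {x. f x = 0}"
  have "subspace N" unfolding N_def subspace_def by (simp add: f.add f.scale)
  moreover have "closed N" unfolding N_def
    by (intro closed_Collect_eq continuous_intros f.continuous_on)
  ultimately interpret N: closed_linear_subspace N by unfold_locales
  define w where "w = z - proj N z"
  have fw: "f w = f z" using N.proj_in[of z] by (simp add: w_def f.diff N_def)
  then have "w \<noteq> 0" using z f.zero by auto
  have "f x = inner (scaleR (f w / inner w w) w) x" for x
  proof -
    have "x - scaleR (f x / f w) w \<in> N" using fw z by (simp add: N_def f.diff f.scale)
    then have "inner w (x - scaleR (f x / f w) w) = 0"
      unfolding w_def by (rule N.proj_orth[unfolded inner_commute[of "z - proj N z"]])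
    then show ?thesis using fw z \<open>w \<noteq> 0\<close> by (simp add: inner_diff_right field_simps)
  qed
  then show ?thesis by blast
qed

lemma adjoint_norm_le:
  fixes T A :: "'a::real_inner \<Rightarrow> 'a"
  assumes "\<And>x y. inner (T x) y = inner x (A y)" and "\<And>x. norm (T x) \<le> norm x * K"
  shows "norm (A y) \<le> norm y * K"
proof (cases "A y = 0")
  case False
  have "(norm (A y))\<^sup>2 = inner (T (A y)) y" by (simp add: assms(1) power2_norm_eq_inner)
  also have "\<dots> \<le> norm (T (A y)) * norm y" by (rule norm_cauchy_schwarz)
  also have "\<dots> \<le> norm (A y) * K * norm y" using assms(2) by (simp add: mult_right_mono)
  finally show ?thesis using False by (simp add: power2_eq_square algebra_simps)
qed (use assms(2)[of y] norm_ge_zero[of "T y"] in \<open>simp del: norm_ge_zero\<close>)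

lemma adjoint_exists:
  fixes T :: "'a::{real_inner,complete_space} \<Rightarrow> 'a"
  assumes "bounded_linear T"
  shows "\<exists>A. bounded_linear A \<and> (\<forall>x y. inner (T x) y = inner x (A y))"
proof -
  interpret T: bounded_linear T by fact
  have "\<exists>z. \<forall>x. inner (T x) y = inner x z" for y
  proof -
    have "bounded_linear (\<lambda>x. inner (T x) y)"
      using assms by (rule bounded_linear_inner_left_comp)
    then show ?thesis by (metis riesz_representation inner_commute)
  qed
  then obtain A where adj: "\<And>x y. inner (T x) y = inner x (A y)"
    by metis
  obtain K where K: "\<And>x. norm (T x) \<le> norm x * K" using T.bounded by blast
  have "bounded_linear A"
  proof (rule bounded_linear_intro)
    show "A (a + b) = A a + A b" for a b
      by (rule vector_eq_ldot[THEN iffD1]) (simp add: adj[symmetric] inner_add_right T.add)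
    show "A (scaleR r a) = scaleR r (A a)" for r a
      by (rule vector_eq_ldot[THEN iffD1]) (simp add: adj[symmetric] T.scaleR)
    show "norm (A y) \<le> norm y * K" for y
      by (rule adjoint_norm_le[OF adj K])
  qed
  with adj show ?thesis by blast
qed

lemma bop_adjoint_exists:
  fixes T :: "'a::complex_hilbert \<Rightarrow> 'a"
  assumes "bop T"
  shows "\<exists>A. bop A \<and> (\<forall>x y. inner (T x) y = inner x (A y))"
proof -
  have "bounded_linear T" using assms by (simp add: bop_def)
  then obtain A where A: "bounded_linear A" and adj: "\<And>x y. inner (T x) y = inner x (A y)"
    using adjoint_exists by blast
  have "inner x (A (iunit y)) = inner x (iunit (A y))" for x y
  proof -
    have "inner x (A (iunit y)) = - inner (iunit (T x)) y"
      by (simp add: adj[symmetric] inner_iunit_right)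
    also have "\<dots> = - inner (T (iunit x)) y" by (simp add: bop_iunit[OF assms])
    also have "\<dots> = inner x (iunit (A y))" by (simp add: adj inner_iunit_right)
    finally show ?thesis .
  qed
  then have "bop A" using A vector_eq_ldot unfolding bop_def by blast
  with adj show ?thesis by blast
qed

section \<open>Square root of \<open>I - X\<close> for a self-adjoint contraction \<open>X\<close>\<close>

text \<open>The square root of \<open>I - X\<close> is summed as a binomial series in the Banach algebra of
  bounded operators.  The library type \<^typ>\<open>'a \<Rightarrow>\<^sub>L 'a\<close> carries no multiplication,
  hence this copy of it with composition as product.\<close>

typedef (overloaded) 'a endo = "UNIV :: ('a::real_normed_vector \<Rightarrow>\<^sub>L 'a) set"
  morphisms blinfun_of_endo Endo by simp

setup_lifting type_definition_endo

instantiation endo :: (real_normed_vector) real_normed_vector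
begin
lift_definition norm_endo :: "'a endo \<Rightarrow> real" is norm .
lift_definition minus_endo :: "'a endo \<Rightarrow> 'a endo \<Rightarrow> 'a endo" is "(-)" .
lift_definition plus_endo :: "'a endo \<Rightarrow> 'a endo \<Rightarrow> 'a endo" is "(+)" .
lift_definition uminus_endo :: "'a endo \<Rightarrow> 'a endo" is "uminus" .
lift_definition zero_endo :: "'a endo" is 0 .
lift_definition scaleR_endo :: "real \<Rightarrow> 'a endo \<Rightarrow> 'a endo" is scaleR .
definition dist_endo :: "'a endo \<Rightarrow> 'a endo \<Rightarrow> real" where "dist_endo a b = norm (a - b)"
definition uniformity_endo :: "('a endo \<times> 'a endo) filter"
  where "uniformity_endo = (INF e\<in>{0 <..}. principal {(x, y). dist x y < e})"
definition open_endo :: "'a endo set \<Rightarrow> bool"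
  where "open_endo S = (\<forall>x\<in>S. \<forall>\<^sub>F (x', y) in uniformity. x' = x \<longrightarrow> y \<in> S)"
definition sgn_endo :: "'a endo \<Rightarrow> 'a endo" where "sgn_endo x = scaleR (inverse (norm x)) x"
instance
  by standard (unfold dist_endo_def open_endo_def sgn_endo_def uniformity_endo_def,
      (rule refl | (transfer, force simp: norm_triangle_ineq algebra_simps))+)
end

instantiation endo :: (real_normed_vector) "{real_normed_algebra, monoid_mult}"
begin
lift_definition times_endo :: "'a endo \<Rightarrow> 'a endo \<Rightarrow> 'a endo" is blinfun_compose .
lift_definition one_endo :: "'a endo" is id_blinfun .
instance
  by standard (transfer; ((rule blinfun_eqI, simp add: blinfun.bilinear_simps)
      | rule norm_blinfun_compose))+
end

instance endo :: (banach) banach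
proof
  fix X :: "nat \<Rightarrow> 'a endo"
  assume "Cauchy X"
  then have "Cauchy (\<lambda>n. blinfun_of_endo (X n))"
    unfolding Cauchy_def dist_endo_def by transfer (simp add: dist_norm)
  then obtain L where "(\<lambda>n. blinfun_of_endo (X n)) \<longlonglongrightarrow> L"
    using Cauchy_convergent_iff convergent_def by blast
  then have "X \<longlonglongrightarrow> Endo L"
    unfolding lim_sequentially dist_endo_def by transfer (simp add: dist_norm)
  then show "convergent X" by (auto simp: convergent_def)
qed

definition endo_apply :: "'a::real_normed_vector endo \<Rightarrow> 'a \<Rightarrow> 'a" where
  "endo_apply F x = blinfun_apply (blinfun_of_endo F) x"

definition endo_of :: "('a::real_normed_vector \<Rightarrow> 'a) \<Rightarrow> 'a endo" where
  "endo_of f = Endo (Blinfun f)"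

lemma endo_apply_mult [simp]: "endo_apply (F * G) x = endo_apply F (endo_apply G x)"
  by (simp add: endo_apply_def times_endo.rep_eq)

lemma endo_apply_one [simp]: "endo_apply 1 x = x"
  by (simp add: endo_apply_def one_endo.rep_eq)

lemma endo_apply_diff [simp]: "endo_apply (F - G) x = endo_apply F x - endo_apply G x"
  by (simp add: endo_apply_def minus_endo.rep_eq blinfun.bilinear_simps)

lemma bounded_linear_endo_apply: "bounded_linear (endo_apply F)"
  unfolding endo_apply_def by (rule blinfun.bounded_linear_right)

lemma bounded_linear_endo_apply_left: "bounded_linear (\<lambda>F. endo_apply F x)"
  unfolding endo_apply_def
  by (rule bounded_linear_compose[OF blinfun.bounded_linear_left])
    (rule bounded_linear_intro[where K=1]; transfer; simp)

lemma endo_apply_endo_of: "bounded_linear f \<Longrightarrow> endo_apply (endo_of f) = f"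
  by (simp add: fun_eq_iff endo_apply_def endo_of_def Endo_inverse bounded_linear_Blinfun_apply)

lemma norm_endo_le: "0 \<le> b \<Longrightarrow> (\<And>x. norm (endo_apply F x) \<le> b * norm x) \<Longrightarrow> norm F \<le> b"
  unfolding endo_apply_def by transfer (rule norm_blinfun_bound)

lemma norm_power_endo_le_one:
  fixes F :: "'a::real_normed_vector endo"
  assumes "norm F \<le> 1"
  shows "norm (F ^ k) \<le> 1"
proof (induction k)
  case 0
  show ?case by (rule norm_endo_le) simp_all
next
  case (Suc k)
  have "norm (F ^ Suc k) \<le> norm F * norm (F ^ k)" by (simp add: norm_mult_ineq)
  also have "\<dots> \<le> 1" using assms Suc by (simp add: mult_le_one)
  finally show ?case .
qed

lemma endo_apply_power_commute:
  assumes "\<And>x. endo_apply F (f x) = f (endo_apply F x)"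
  shows "endo_apply (F ^ k) (f x) = f (endo_apply (F ^ k) x)"
  using assms by (induction k arbitrary: x) simp_all

lemma endo_apply_power_self_adjoint:
  fixes F :: "'a::real_inner endo"
  assumes "\<And>x y. inner (endo_apply F x) y = inner x (endo_apply F y)"
  shows "inner (endo_apply (F ^ k) x) y = inner x (endo_apply (F ^ k) y)"
proof (induction k arbitrary: x)
  case (Suc k)
  have "inner (endo_apply (F ^ Suc k) x) y = inner (endo_apply F x) (endo_apply (F ^ k) y)"
    by (simp only: power_Suc2 endo_apply_mult Suc)
  also have "\<dots> = inner x (endo_apply (F ^ Suc k) y)"
    by (simp only: power_Suc endo_apply_mult assms)
  finally show ?case .
qed simp

text \<open>The binomial series \<open>sqrt (1 - x) = (\<Sum>k. sqrt_coeff k * x ^ k)\<close>.\<close>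

definition sqrt_coeff :: "nat \<Rightarrow> real" where
  "sqrt_coeff k = (-1) ^ k * ((1/2) gchoose k)"

lemma sqrt_coeff_0 [simp]: "sqrt_coeff 0 = 1"
  by (simp add: sqrt_coeff_def)

lemma sqrt_coeff_convolution:
  "(\<Sum>i\<le>m. sqrt_coeff i * sqrt_coeff (m - i)) = (if m = 0 then 1 else if m = 1 then -1 else 0)"
proof -
  have "sqrt_coeff i * sqrt_coeff (m - i) = (-1) ^ m * (((1/2) gchoose i) * ((1/2) gchoose (m - i)))"
    if "i \<le> m" for i
    using that by (simp add: sqrt_coeff_def power_add[symmetric] algebra_simps)
  then have "(\<Sum>i\<le>m. sqrt_coeff i * sqrt_coeff (m - i))
      = (-1) ^ m * (\<Sum>i\<le>m. ((1/2::real) gchoose i) * ((1/2) gchoose (m - i)))"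
    by (simp add: sum_distrib_left)
  also have "(\<Sum>i\<le>m. ((1/2::real) gchoose i) * ((1/2) gchoose (m - i))) = (1::real) gchoose m"
    using gbinomial_Vandermonde[of "1/2::real" "1/2" m] by (simp add: atMost_atLeast0)
  also have "(1::real) gchoose m = of_nat (1 choose m)"
    using of_nat_gbinomial[of "1::nat" m, where 'a=real] gbinomial_binomial[of "1::nat" m] by simp
  finally show ?thesis by (cases m) (auto simp: binomial_eq_0)
qed

lemma sqrt_coeff_nonpos:
  assumes "k \<ge> 1"
  shows "sqrt_coeff k \<le> 0"
proof -
  have "fact k * sqrt_coeff k = fact k * ((of_nat k - 3/2) gchoose k)"
    unfolding sqrt_coeff_def
    by (subst gbinomial_negated_upper) (simp add: power_mult_distrib[symmetric] algebra_simps)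
  also have "\<dots> = (\<Prod>i = 0..<k. (of_nat k - 3/2) - of_nat i)"
    by (rule gbinomial_mult_fact)
  also have "\<dots> = (\<Prod>i = 0..<k-1. (of_nat k - 3/2) - of_nat i) * ((of_nat k - 3/2) - of_nat (k-1))"
    using assms by (cases k) (auto simp: algebra_simps)
  also have "\<dots> \<le> 0"
    using assms by (intro mult_nonneg_nonpos prod_nonneg) auto
  finally show ?thesis using fact_gt_zero[where 'a=real, of k] by (auto simp: mult_le_0_iff)
qed

lemma sqrt_coeff_partial_sum_nonneg: "(\<Sum>k\<le>m. sqrt_coeff k) \<ge> 0"
proof -
  have "(\<Sum>k\<le>m. sqrt_coeff k) = (\<Sum>k\<le>m. ((1/2::real) gchoose k) * (-1) ^ k)"
    by (simp add: sqrt_coeff_def mult.commute)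
  also have "\<dots> = (-1) ^ m * ((1/2 - 1) gchoose m)" by (rule gbinomial_sum_lower_neg)
  also have "\<dots> = (of_nat m - 1/2) gchoose m"
    by (subst gbinomial_negated_upper) (simp add: power_mult_distrib[symmetric])
  also have "fact m * \<dots> = (\<Prod>i = 0..<m. (of_nat m - 1/2) - of_nat i :: real)"
    by (rule gbinomial_mult_fact)
  finally have "fact m * (\<Sum>k\<le>m. sqrt_coeff k) = (\<Prod>i = 0..<m. (of_nat m - 1/2) - of_nat i :: real)" .
  moreover have "(\<Prod>i = 0..<m. (of_nat m - 1/2) - of_nat i :: real) \<ge> 0"
    by (rule prod_nonneg) auto
  ultimately show ?thesis
    using fact_gt_zero[where 'a=real, of m] by (metis zero_le_mult_iff not_le)
qed

lemma summable_abs_sqrt_coeff: "summable (\<lambda>k. \<bar>sqrt_coeff k\<bar>)"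
proof (rule summableI_nonneg_bounded[where x=2])
  fix n
  have "(\<Sum>k\<le>n. \<bar>sqrt_coeff k\<bar>) = 2 - (\<Sum>k\<le>n. sqrt_coeff k)"
    by (induction n) (simp_all add: sqrt_coeff_nonpos)
  then have "(\<Sum>k\<le>n. \<bar>sqrt_coeff k\<bar>) \<le> 2"
    using sqrt_coeff_partial_sum_nonneg[of n] by simp
  moreover have "(\<Sum>k<n. \<bar>sqrt_coeff k\<bar>) \<le> (\<Sum>k\<le>n. \<bar>sqrt_coeff k\<bar>)"
    by (rule sum_mono2) auto
  ultimately show "(\<Sum>k<n. \<bar>sqrt_coeff k\<bar>) \<le> 2" by simp
qed simp

lemma sqrt_series_square:
  fixes X :: "'a::{real_normed_algebra, monoid_mult, banach}"
  assumes "\<And>k. norm (X ^ k) \<le> 1"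
  shows "summable (\<lambda>k. norm (sqrt_coeff k *\<^sub>R X ^ k))"
    and "(\<Sum>k. sqrt_coeff k *\<^sub>R X ^ k) * (\<Sum>k. sqrt_coeff k *\<^sub>R X ^ k) = 1 - X"
proof -
  show summable: "summable (\<lambda>k. norm (sqrt_coeff k *\<^sub>R X ^ k))"
    using assms by (intro summable_comparison_test[OF _ summable_abs_sqrt_coeff])
      (auto intro!: mult_left_le)
  have "(\<Sum>k. sqrt_coeff k *\<^sub>R X ^ k) * (\<Sum>k. sqrt_coeff k *\<^sub>R X ^ k)
      = (\<Sum>k. \<Sum>i\<le>k. (sqrt_coeff i *\<^sub>R X ^ i) * (sqrt_coeff (k - i) *\<^sub>R X ^ (k - i)))"
    by (rule Cauchy_product[OF summable summable])
  also have "\<dots> = (\<Sum>k. (\<Sum>i\<le>k. sqrt_coeff i * sqrt_coeff (k - i)) *\<^sub>R X ^ k)"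
    by (simp add: scaleR_sum_left power_add[symmetric] mult.commute)
  also have "\<dots> = (\<Sum>k\<in>{0,1}. (if k = 0 then 1 else if k = 1 then -1 else 0) *\<^sub>R X ^ k)"
    unfolding sqrt_coeff_convolution by (rule sums_unique[symmetric], rule sums_finite) auto
  also have "\<dots> = 1 - X" by simp
  finally show "(\<Sum>k. sqrt_coeff k *\<^sub>R X ^ k) * (\<Sum>k. sqrt_coeff k *\<^sub>R X ^ k) = 1 - X" .
qed

lemma sqrt_id_minus_exists:
  fixes X :: "'a::complex_hilbert \<Rightarrow> 'a"
  assumes "bop X" and self_adjoint: "\<And>x y. inner (X x) y = inner x (X y)"
    and "\<And>x. norm (X x) \<le> norm x"
  shows "\<exists>D. bop D \<and> (\<forall>x y. inner (D x) y = inner x (D y)) \<and> (\<forall>x. D (D x) = x - X x)"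
proof -
  define F where "F = endo_of X"
  have F: "endo_apply F = X"
    unfolding F_def using assms(1) by (simp add: bop_def endo_apply_endo_of)
  have "norm F \<le> 1" by (rule norm_endo_le) (simp_all add: F assms(3))
  note sqrt = sqrt_series_square[OF norm_power_endo_le_one[OF this]]
  define D where "D = endo_apply (\<Sum>k. sqrt_coeff k *\<^sub>R F ^ k)"
  have D: "(\<lambda>k. sqrt_coeff k *\<^sub>R endo_apply (F ^ k) x) sums D x" for x
    unfolding D_def
    using bounded_linear.sums[OF bounded_linear_endo_apply_left
        summable_sums[OF summable_norm_cancel[OF sqrt(1)]]]
    by (simp add: endo_apply_def blinfun.bilinear_simps scaleR_endo.rep_eq)
  have "D (iunit x) = iunit (D x)" for x
    using bounded_linear.sums[OF bounded_linear_iunit D[of x]] D[of "iunit x"]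
    by (simp add: endo_apply_power_commute[where f=iunit] F bop_iunit[OF assms(1)] iunit_scaleR
        sums_unique2)
  moreover have "bounded_linear D" unfolding D_def by (rule bounded_linear_endo_apply)
  ultimately have "bop D" by (simp add: bop_def)
  moreover have "inner (D x) y = inner x (D y)" for x y
  proof -
    have "(\<lambda>k. inner (sqrt_coeff k *\<^sub>R endo_apply (F ^ k) x) y) sums inner (D x) y"
      by (rule bounded_linear.sums[OF bounded_linear_inner_left D])
    moreover have "(\<lambda>k. inner x (sqrt_coeff k *\<^sub>R endo_apply (F ^ k) y)) sums inner x (D y)"
      by (rule bounded_linear.sums[OF bounded_linear_inner_right D])
    ultimately show ?thesis
      by (simp add: endo_apply_power_self_adjoint F self_adjoint sums_unique2)
  qed
  moreover have "D (D x) = x - X x" for x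
    using arg_cong[OF sqrt(2), of "\<lambda>G. endo_apply G x"] by (simp add: D_def F)
  ultimately show ?thesis by blast
qed

section \<open>A unitary on \<open>E \<oplus> E\<close> prescribed on the range of an isometry\<close>

lemma subspace_closure:
  fixes S :: "'a::real_normed_vector set"
  assumes "subspace S"
  shows "subspace (closure S)"
proof -
  have "(\<lambda>p. fst p + snd p) ` (S \<times> S) \<subseteq> closure S"
    using assms by (auto simp: subspace_add intro!: closure_subset[THEN subsetD])
  then have add: "(\<lambda>p. fst p + snd p) ` (closure S \<times> closure S) \<subseteq> closure S"
    using image_closure_subset[OF _ closed_closure, of "S \<times> S" "\<lambda>p. fst p + snd p"]
    by (simp add: closure_Times continuous_on_add continuous_on_fst continuous_on_snd
       )
  have "scaleR r ` S \<subseteq> closure S" for r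
    using assms by (auto simp: subspace_scale intro!: closure_subset[THEN subsetD])
  then have scale: "scaleR r ` closure S \<subseteq> closure S" for r
    using image_closure_subset[OF _ closed_closure, of S "scaleR r"]
    by (simp add: continuous_on_scaleR)
  show ?thesis
    unfolding subspace_def
  proof (intro conjI ballI allI)
    show "0 \<in> closure S" using assms closure_subset subspace_0 by blast
    show "x + y \<in> closure S" if "x \<in> closure S" "y \<in> closure S" for x y
      using add that by force
    show "scaleR c x \<in> closure S" if "x \<in> closure S" for c x
      using scale that by blast
  qed
qed

lemma eq_on_closure_if_continuous:
  fixes f g :: "'a::topological_space \<Rightarrow> 'b::real_normed_vector"
  assumes "continuous_on (closure A) f" and "continuous_on (closure A) g"
    and "\<And>x. x \<in> A \<Longrightarrow> f x = g x" and "x \<in> closure A"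
  shows "f x = g x"
  using continuous_constant_on_closure[of A "\<lambda>x. f x - g x" 0 x] assms
  by (simp add: continuous_on_diff)

lemma linear_on_closure:
  fixes g :: "'a::real_normed_vector \<Rightarrow> 'b::real_normed_vector"
  assumes "subspace A" and g: "continuous_on (closure A) g"
    and add: "\<And>a b. a \<in> A \<Longrightarrow> b \<in> A \<Longrightarrow> g (a + b) = g a + g b"
    and scale: "\<And>r a. a \<in> A \<Longrightarrow> g (scaleR r a) = scaleR r (g a)"
  shows "x \<in> closure A \<Longrightarrow> y \<in> closure A \<Longrightarrow> g (x + y) = g x + g y"
    and "x \<in> closure A \<Longrightarrow> g (scaleR r x) = scaleR r (g x)"
proof -
  have sub: "subspace (closure A)" using assms(1) by (rule subspace_closure)
  assume "x \<in> closure A" "y \<in> closure A"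
  then have "(x, y) \<in> closure (A \<times> A)" by (simp add: closure_Times)
  then have "(\<lambda>p. g (fst p + snd p)) (x, y) = (\<lambda>p. g (fst p) + g (snd p)) (x, y)"
  proof (rule eq_on_closure_if_continuous[rotated 3])
    show "continuous_on (closure (A \<times> A)) (\<lambda>p. g (fst p + snd p))"
      unfolding closure_Times
      by (rule continuous_on_compose2[OF g], intro continuous_intros) (auto simp: subspace_add[OF sub])
    show "continuous_on (closure (A \<times> A)) (\<lambda>p. g (fst p) + g (snd p))"
      unfolding closure_Times by (intro continuous_intros continuous_on_compose2[OF g]) auto
  qed (auto simp: add)
  then show "g (x + y) = g x + g y" by simp
next
  assume x: "x \<in> closure A"
  show "g (scaleR r x) = scaleR r (g x)"
  proof (rule eq_on_closure_if_continuous[OF _ _ scale x])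
    show "continuous_on (closure A) (\<lambda>x. g (scaleR r x))"
      by (rule continuous_on_compose2[OF g], intro continuous_intros)
        (auto simp: subspace_scale[OF subspace_closure[OF assms(1)]])
    show "continuous_on (closure A) (\<lambda>x. scaleR r (g x))"
      by (intro continuous_intros g)
  qed
qed

lemma isometry_extends_to_closure:
  fixes R :: "'h::real_normed_vector \<Rightarrow> 'e::real_normed_vector" and S :: "'h \<Rightarrow> 'f::banach"
  assumes R: "linear R" and S: "linear S" and norm_eq: "\<And>h. norm (R h) = norm (S h)"
  obtains g where "continuous_on (closure (range R)) g" and "\<And>h. g (R h) = S h"
    and "\<And>x y. x \<in> closure (range R) \<Longrightarrow> y \<in> closure (range R) \<Longrightarrow> g (x + y) = g x + g y"
    and "\<And>x r. x \<in> closure (range R) \<Longrightarrow> g (scaleR r x) = scaleR r (g x)"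
    and "\<And>x. x \<in> closure (range R) \<Longrightarrow> norm (g x) = norm x"
proof -
  define A where "A = range R"
  define f where "f a = S (SOME h. R h = a)" for a
  have fR: "f (R h) = S h" for h
  proof -
    have "R (SOME h'. R h' = R h) = R h" by (rule someI) simp
    then have "norm (S ((SOME h'. R h' = R h) - h)) = 0"
      by (simp add: norm_eq[symmetric] linear_diff[OF R])
    then show ?thesis by (simp add: f_def linear_diff[OF S])
  qed
  have "uniformly_continuous_on A f"
    unfolding uniformly_continuous_on_def A_def
    by (auto intro!: exI simp: fR dist_norm norm_eq[symmetric] linear_diff[OF R]
        linear_diff[OF S, symmetric])
  then obtain g where "uniformly_continuous_on (closure A) g" and f_eq_g: "\<And>x. x \<in> A \<Longrightarrow> f x = g x"
    by (rule uniformly_continuous_on_extension_on_closure) blast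
  then have g: "continuous_on (closure A) g"
    using uniformly_continuous_imp_continuous by blast
  have gR: "g (R h) = S h" for h using f_eq_g[of "R h"] fR by (simp add: A_def)
  have sub: "subspace A" unfolding A_def by (rule linear_subspace_image[OF R subspace_UNIV])
  have add: "g (a + b) = g a + g b" if "a \<in> A" "b \<in> A" for a b
    using that by (auto simp: A_def gR linear_add[OF R, symmetric] linear_add[OF S])
  have scale: "g (scaleR r a) = scaleR r (g a)" if "a \<in> A" for a r
    using that by (auto simp: A_def gR linear_scale[OF R, symmetric] linear_scale[OF S])
  note linear = linear_on_closure[OF sub g add scale]
  have "norm (g x) = norm x" if "x \<in> closure A" for x
  proof (rule eq_on_closure_if_continuous[OF _ _ _ that])
    show "continuous_on (closure A) (\<lambda>x. norm (g x))" by (intro continuous_intros g)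
    show "norm (g a) = norm a" if "a \<in> A" for a using that by (auto simp: A_def gR norm_eq)
  qed (intro continuous_intros)
  with g gR linear show ?thesis unfolding A_def by (rule that)
qed

lemma partial_isometry_adjoint:
  fixes U U' :: "'a::real_inner \<Rightarrow> 'a"
  assumes adj: "\<And>x y. inner (U x) y = inner x (U' y)" and "\<And>x. U (U' (U x)) = U x"
  shows "U' (U (U' y)) = U' y"
proof -
  have "inner x (U' (U (U' y))) = inner x (U' y)" for x
  proof -
    have "inner x (U' (U (U' y))) = inner (U' (U x)) (U' y)"
      by (simp add: adj[symmetric] inner_commute)
    also have "\<dots> = inner (U (U' (U x))) y" by (simp add: adj)
    finally show ?thesis by (simp add: assms(2) adj)
  qed
  then show ?thesis using vector_eq_ldot by blast
qed

text \<open>Halmos' unitary dilation \<open>[[U, I - U U'], [I - U' U, - U']]\<close> of a partial isometry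
  \<open>U\<close> with adjoint \<open>U'\<close>.\<close>

definition halmos_dilation :: "('a::ab_group_add \<Rightarrow> 'a) \<Rightarrow> ('a \<Rightarrow> 'a) \<Rightarrow> 'a \<times> 'a \<Rightarrow> 'a \<times> 'a" where
  "halmos_dilation U U' p =
     (U (fst p) + (snd p - U (U' (snd p))), (fst p - U' (U (fst p))) - U' (snd p))"

lemma halmos_dilation_inverse:
  assumes "linear U" and "linear U'"
    and "\<And>x. U (U' (U x)) = U x" and "\<And>x. U' (U (U' x)) = U' x"
  shows "halmos_dilation U U' (halmos_dilation U' U p) = p"
  using assms
  by (simp add: halmos_dilation_def linear_add linear_diff linear_neg prod_eq_iff algebra_simps)

lemma halmos_dilation_adjoint:
  fixes U U' :: "'a::real_inner \<Rightarrow> 'a"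
  assumes "linear U" and "linear U'" and adj: "\<And>x y. inner (U x) y = inner x (U' y)"
  shows "inner (halmos_dilation U U' p) q = inner p (halmos_dilation U' U q)"
proof -
  have adj': "inner (U' x) y = inner x (U y)" for x y by (metis adj inner_commute)
  show ?thesis
    unfolding halmos_dilation_def inner_prod_def
    by (simp add: inner_add_left inner_add_right inner_diff_left inner_diff_right adj adj')
qed

lemma bop_halmos_dilation:
  assumes "bop U" and "bop U'"
  shows "bop (halmos_dilation U U')"
proof -
  have U: "bounded_linear U" and U': "bounded_linear U'" using assms by (simp_all add: bop_def)
  have UU': "bounded_linear (\<lambda>x. U (U' x))" and U'U: "bounded_linear (\<lambda>x. U' (U x))"
    using bounded_linear_compose[OF U U'] bounded_linear_compose[OF U' U] by (simp_all add: o_def)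
  have "bounded_linear (halmos_dilation U U')"
    unfolding halmos_dilation_def[abs_def]
    by (rule bounded_linear_Pair[OF
          bounded_linear_add[OF bounded_linear_compose[OF U bounded_linear_fst]
            bounded_linear_sub[OF bounded_linear_snd bounded_linear_compose[OF UU' bounded_linear_snd]]]
          bounded_linear_sub[OF
            bounded_linear_sub[OF bounded_linear_fst bounded_linear_compose[OF U'U bounded_linear_fst]]
            bounded_linear_compose[OF U' bounded_linear_snd]]])
  moreover have "halmos_dilation U U' (iunit p) = iunit (halmos_dilation U U' p)" for p
    using assms by (cases p) (simp add: halmos_dilation_def bop_iunit iunit_add iunit_diff)
  ultimately show ?thesis by (simp add: bop_def)
qed

lemma iunit_in_closure:
  fixes A :: "'a::complex_hilbert set"
  assumes "\<And>a. a \<in> A \<Longrightarrow> iunit a \<in> A" and "x \<in> closure A"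
  shows "iunit x \<in> closure A"
proof -
  have "continuous_on (closure A) iunit"
    using bounded_linear_iunit linear_continuous_on by blast
  moreover have "iunit ` A \<subseteq> closure A" using assms(1) closure_subset by blast
  ultimately show ?thesis using image_closure_subset closed_closure assms(2) by blast
qed

lemma iunit_commute_on_closure:
  fixes g :: "'a::complex_hilbert \<Rightarrow> 'b::complex_hilbert"
  assumes g: "continuous_on (closure A) g" and iunit_A: "\<And>a. a \<in> A \<Longrightarrow> iunit a \<in> A"
    and "\<And>a. a \<in> A \<Longrightarrow> g (iunit a) = iunit (g a)" and "x \<in> closure A"
  shows "g (iunit x) = iunit (g x)"
proof (rule eq_on_closure_if_continuous[of A, OF _ _ assms(3,4)])
  show "continuous_on (closure A) (\<lambda>x. g (iunit x))"
    by (rule continuous_on_compose2[OF g linear_continuous_on[OF bounded_linear_iunit]])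
      (auto intro: iunit_in_closure[OF iunit_A])
  show "continuous_on (closure A) (\<lambda>x. iunit (g x))"
    by (rule continuous_on_compose2[OF linear_continuous_on[OF bounded_linear_iunit] g]) auto
qed

lemma partial_isometry_extending_isometry:
  fixes R S :: "'h::complex_hilbert \<Rightarrow> 'e::complex_hilbert"
  assumes R: "bounded_linear R" and S: "bounded_linear S"
    and iunit_R: "\<And>x. R (iunit x) = iunit (R x)" and iunit_S: "\<And>x. S (iunit x) = iunit (S x)"
    and norm_eq: "\<And>h. norm (R h) = norm (S h)"
  shows "\<exists>U U'. bop U \<and> bop U' \<and> (\<forall>x y. inner (U x) y = inner x (U' y))
    \<and> (\<forall>x. U (U' (U x)) = U x) \<and> (\<forall>h. U (R h) = S h) \<and> (\<forall>h. U' (U (R h)) = R h)"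
proof -
  define M where "M = closure (range R)"
  obtain g where g: "continuous_on M g" and gR: "\<And>h. g (R h) = S h"
    and g_add: "\<And>x y. x \<in> M \<Longrightarrow> y \<in> M \<Longrightarrow> g (x + y) = g x + g y"
    and g_scale: "\<And>x r. x \<in> M \<Longrightarrow> g (scaleR r x) = scaleR r (g x)"
    and g_norm: "\<And>x. x \<in> M \<Longrightarrow> norm (g x) = norm x"
    using isometry_extends_to_closure[OF bounded_linear.linear[OF R] bounded_linear.linear[OF S] norm_eq]
    unfolding M_def by blast
  interpret M: closed_linear_subspace M
    unfolding M_def
    by unfold_locales
      (simp_all add: subspace_closure linear_subspace_image[OF bounded_linear.linear[OF R]])
  have iunit_range: "iunit a \<in> range R" if "a \<in> range R" for a
    using that by (auto simp: iunit_R[symmetric])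
  have iunit_M: "iunit x \<in> M" if "x \<in> M" for x
    using iunit_in_closure[OF iunit_range that[unfolded M_def]] by (simp add: M_def)
  have "g (iunit a) = iunit (g a)" if "a \<in> range R" for a
    using that by (auto simp: gR iunit_R[symmetric] iunit_S)
  then have g_iunit: "g (iunit x) = iunit (g x)" if "x \<in> M" for x
    using iunit_commute_on_closure[OF g[unfolded M_def] iunit_range _ that[unfolded M_def]] by blast
  have g_inner: "inner (g x) (g y) = inner x y" if "x \<in> M" "y \<in> M" for x y
    using g_norm[OF that(1)] g_norm[OF that(2)] g_norm[OF subspace_add[OF M.subspace that]]
      g_add[OF that]
    unfolding norm_eq_sqrt_inner by (simp add: inner_add_left inner_add_right inner_commute)
  define U where "U x = g (proj M x)" for x
  have "bounded_linear U"
    by (rule bounded_linear_intro[where K=1])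
      (simp_all add: U_def M.proj_add M.proj_scaleR g_add g_scale g_norm M.proj_in M.norm_proj_le)
  then have "bop U"
    by (simp add: bop_def U_def proj_iunit[OF M.closed_linear_subspace_axioms iunit_M] g_iunit M.proj_in)
  then obtain U' where "bop U'" and adj: "\<And>x y. inner (U x) y = inner x (U' y)"
    using bop_adjoint_exists by blast
  have U'U: "U' (U x) = proj M x" for x
  proof -
    have "inner y (U' (U x)) = inner y (proj M x)" for y
      using M.inner_proj_proj[of y x] M.inner_proj_proj[of x y]
      by (simp add: adj[symmetric] U_def g_inner M.proj_in inner_commute)
    then show ?thesis using vector_eq_ldot by blast
  qed
  have RM: "R h \<in> M" for h unfolding M_def by (rule closure_subset[THEN subsetD]) simp
  have "U (U' (U x)) = U x" for x unfolding U'U by (simp add: U_def M.proj_proj)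
  moreover have "U (R h) = S h" for h by (simp add: U_def M.proj_id[OF RM] gR)
  moreover have "U' (U (R h)) = R h" for h by (simp add: U'U M.proj_id[OF RM])
  ultimately show ?thesis using \<open>bop U\<close> \<open>bop U'\<close> adj by blast
qed

lemma unitary_extending_isometry:
  fixes R S :: "'h::complex_hilbert \<Rightarrow> 'e::complex_hilbert"
  assumes "bounded_linear R" and "bounded_linear S"
    and "\<And>x. R (iunit x) = iunit (R x)" and "\<And>x. S (iunit x) = iunit (S x)"
    and "\<And>h. norm (R h) = norm (S h)"
  shows "\<exists>G G'. bop G \<and> bop G' \<and> (\<forall>x y. inner (G x) y = inner x (G' y))
    \<and> (\<forall>x. G (G' x) = x) \<and> (\<forall>x. G' (G x) = x) \<and> (\<forall>h. G (R h, 0::'e) = (S h, 0::'e))"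
proof -
  obtain U U' where U: "bop U" and U': "bop U'" and adj: "\<And>x y. inner (U x) y = inner x (U' y)"
    and partial: "\<And>x. U (U' (U x)) = U x" and UR: "\<And>h. U (R h) = S h"
    and U'UR: "\<And>h. U' (U (R h)) = R h"
    using partial_isometry_extending_isometry[OF assms] by metis
  have lin: "linear U" "linear U'" using U U' by (simp_all add: bop_def bounded_linear.linear)
  have partial': "U' (U (U' x)) = U' x" for x by (rule partial_isometry_adjoint[OF adj partial])
  have "bop (halmos_dilation U U')" "bop (halmos_dilation U' U)"
    using U U' by (simp_all add: bop_halmos_dilation)
  moreover have "inner (halmos_dilation U U' x) y = inner x (halmos_dilation U' U y)" for x y
    by (rule halmos_dilation_adjoint[OF lin adj])
  moreover have "halmos_dilation U U' (halmos_dilation U' U x) = x" for x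
    using lin partial partial' by (rule halmos_dilation_inverse)
  moreover have "halmos_dilation U' U (halmos_dilation U U' x) = x" for x
    using lin partial partial' by (intro halmos_dilation_inverse)
  moreover have "halmos_dilation U U' (R h, 0::'e) = (S h, 0::'e)" for h
    using lin U'UR[of h] by (simp add: halmos_dilation_def UR linear_0)
  ultimately show ?thesis
    by (intro exI[of _ "halmos_dilation U U'"] exI[of _ "halmos_dilation U' U"]) simp
qed

section \<open>The Hilbert space \<open>\<ell>\<^sup>2(\<nat>, H)\<close> and operators acting on blocks\<close>

lemma l2add_in_l2: "x \<in> l2 \<Longrightarrow> y \<in> l2 \<Longrightarrow> l2add x y \<in> l2"
proof -
  assume "x \<in> l2" "y \<in> l2"
  then have "summable (\<lambda>n. 2 * (norm (x n))\<^sup>2 + 2 * (norm (y n))\<^sup>2)"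
    by (intro summable_add summable_mult) (simp_all add: l2_def)
  moreover have "(norm (x n + y n))\<^sup>2 \<le> 2 * (norm (x n))\<^sup>2 + 2 * (norm (y n))\<^sup>2" for n
    using parallelogram_law[of "x n" "y n"] zero_le_power2[of "norm (x n - y n)"] by linarith
  ultimately show "l2add x y \<in> l2"
    unfolding l2_def l2add_def by (auto intro: summable_comparison_test')
qed

lemma l2scale_in_l2: "x \<in> l2 \<Longrightarrow> l2scale c x \<in> l2"
  by (simp add: l2_def l2scale_def power_mult_distrib summable_mult)

lemma closed_csubspace_l2: "closed_csubspace l2"
proof -
  have "(\<lambda>n. 0) \<in> l2" by (simp add: l2_def)
  then show ?thesis by (auto simp: closed_csubspace_def l2add_in_l2 l2scale_in_l2)
qed

lemma emb_in_l2: "emb h \<in> l2"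
proof -
  have "(\<lambda>n. (norm (emb h n))\<^sup>2) = (\<lambda>n. if n = 0 then (norm h)\<^sup>2 else 0)"
    by (auto simp: emb_def)
  then show ?thesis by (simp add: l2_def)
qed

lemma l2cinner_emb: "l2cinner (emb h) x = cinner h (x 0)"
proof -
  have "(\<lambda>n. cinner (emb h n) (x n)) = (\<lambda>n. if n = 0 then cinner h (x 0) else 0)"
    by (auto simp: emb_def)
  then show ?thesis
    unfolding l2cinner_def using sums_single[of 0 "\<lambda>_. cinner h (x 0)"] by (simp add: sums_iff)
qed

lemma summable_cinner_l2:
  assumes "x \<in> l2" and "y \<in> l2"
  shows "summable (\<lambda>n. cinner (x n) (y n))"
proof (rule summable_comparison_test')
  show "summable (\<lambda>n. (norm (x n))\<^sup>2 + (norm (y n))\<^sup>2)"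
    using assms by (intro summable_add) (simp_all add: l2_def)
  show "norm (cinner (x n) (y n)) \<le> (norm (x n))\<^sup>2 + (norm (y n))\<^sup>2" for n
    using cmod_cinner_le[of "x n" "y n"] sum_squares_bound[of "norm (x n)" "norm (y n)"]
      mult_nonneg_nonneg[OF norm_ge_zero norm_ge_zero, of "x n" "y n"]
    by linarith
qed

lemma bop_on_comp:
  assumes "bop_on K S" and "bop_on K T" and "K \<subseteq> l2"
  shows "bop_on K (\<lambda>x. S (T x))"
proof -
  obtain C1 where C1: "\<forall>x\<in>K. l2norm (S x) \<le> C1 * l2norm x" using assms(1) by (auto simp: bop_on_def)
  obtain C2 where C2: "\<forall>x\<in>K. l2norm (T x) \<le> C2 * l2norm x" using assms(2) by (auto simp: bop_on_def)
  have nonneg: "l2norm x \<ge> 0" if "x \<in> K" for x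
    using that assms(3) by (auto simp: l2norm_def l2_def intro!: suminf_nonneg)
  have "l2norm (S (T x)) \<le> (max C1 0 * max C2 0) * l2norm x" if "x \<in> K" for x
  proof -
    have Tx: "T x \<in> K" using assms(2) that by (simp add: bop_on_def)
    have "l2norm (S (T x)) \<le> max C1 0 * l2norm (T x)"
      using C1 Tx nonneg[OF Tx] by (meson max.cobounded1 mult_right_mono order_trans)
    also have "\<dots> \<le> max C1 0 * (max C2 0 * l2norm x)"
      using C2 that nonneg[OF that]
      by (intro mult_left_mono) (auto intro: order_trans[OF _ mult_right_mono])
    finally show ?thesis by (simp add: mult.assoc)
  qed
  then show ?thesis using assms(1,2) unfolding bop_on_def by auto
qed

lemma is_adj_on_comp:
  assumes "is_adj_on K S S'" and "is_adj_on K T T'" and "bop_on K T" and "K \<subseteq> l2"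
  shows "is_adj_on K (\<lambda>x. S (T x)) (\<lambda>y. T' (S' y))"
proof -
  have "bop_on K T'" and "bop_on K S'" using assms(1,2) by (simp_all add: is_adj_on_def)
  then have "bop_on K (\<lambda>y. T' (S' y))" using assms(4) by (rule bop_on_comp)
  moreover have "l2cinner (S (T x)) y = l2cinner x (T' (S' y))" if "x \<in> K" "y \<in> K" for x y
    using assms(1-3) that by (simp add: is_adj_on_def bop_on_def)
  ultimately show ?thesis by (simp add: is_adj_on_def)
qed

lemma sums_blocks4:
  fixes f :: "nat \<Rightarrow> 'a::real_normed_vector"
  assumes "f sums s"
  shows "(\<lambda>k. f (4*k+1) + f (4*k+2) + f (4*k+3) + f (4*k+4)) sums (s - f 0)"
proof -
  have "(\<lambda>n. f (Suc n)) sums (s - f 0)" using assms by (simp add: sums_Suc_iff)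
  from sums_group[OF this, of 4]
  have "(\<lambda>n. sum (\<lambda>n. f (Suc n)) {n * 4..<n * 4 + 4}) sums (s - f 0)" by simp
  moreover have "sum (\<lambda>n. f (Suc n)) {n * 4..<n * 4 + 4}
      = f (4*n+1) + f (4*n+2) + f (4*n+3) + f (4*n+4)" for n
    by (simp add: numeral_eq_Suc add.commute mult.commute sum.atLeastLessThan_Suc add.assoc)
  ultimately show ?thesis by simp
qed

lemma suminf_blocks4:
  fixes f :: "nat \<Rightarrow> 'a::real_normed_vector"
  assumes "summable f"
  shows "suminf f = f 0 + (\<Sum>k. f (4*k+1) + f (4*k+2) + f (4*k+3) + f (4*k+4))"
  using sums_unique[OF sums_blocks4[OF summable_sums[OF assms]]] by (metis diff_eq_eq add.commute)

lemma summable_blocks4_nonneg: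
  fixes f g :: "nat \<Rightarrow> real"
  assumes g_nonneg: "\<And>n. g n \<ge> 0" and f: "summable f" and f_nonneg: "\<And>n. f n \<ge> 0"
    and eq_0: "g 0 = f 0"
    and eq_blocks: "\<And>k. g (4*k+1) + g (4*k+2) + g (4*k+3) + g (4*k+4)
                      = f (4*k+1) + f (4*k+2) + f (4*k+3) + f (4*k+4)"
  shows "summable g" and "suminf g = suminf f"
proof -
  have partial_sums: "(\<Sum>n<4*K+1. g n) = (\<Sum>n<4*K+1. f n)" for K
  proof (induction K)
    case (Suc K)
    have "(\<Sum>n<4*Suc K+1. g n)
        = (\<Sum>n<4*K+1. g n) + (g (4*K+1) + g (4*K+2) + g (4*K+3) + g (4*K+4))"
      and "(\<Sum>n<4*Suc K+1. f n)
        = (\<Sum>n<4*K+1. f n) + (f (4*K+1) + f (4*K+2) + f (4*K+3) + f (4*K+4))"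
      by (simp_all add: numeral_eq_Suc algebra_simps)
    then show ?case using Suc eq_blocks by simp
  qed (simp add: eq_0)
  show "summable g"
  proof (rule summableI_nonneg_bounded[where x="suminf f"])
    fix N
    have "(\<Sum>n<N. g n) \<le> (\<Sum>n<4*N+1. g n)" by (rule sum_mono2) (auto simp: g_nonneg)
    also have "\<dots> \<le> suminf f"
      unfolding partial_sums by (rule sum_le_suminf[OF f]) (auto simp: f_nonneg)
    finally show "(\<Sum>n<N. g n) \<le> suminf f" .
  qed (rule g_nonneg)
  then show "suminf g = suminf f"
    using suminf_blocks4[OF \<open>summable g\<close>] suminf_blocks4[OF f] eq_0 eq_blocks by simp
qed

text \<open>Blocks pair \<open>x(4k+1)\<close> with \<open>x(4k+3)\<close>: these are the two coordinates that a product of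
  two co-isometric lifts (below) feeds into the defect operators.\<close>

definition block :: "(nat \<Rightarrow> 'a) \<Rightarrow> nat \<Rightarrow> ('a \<times> 'a) \<times> ('a \<times> 'a)" where
  "block x k = ((x (4*k+1), x (4*k+3)), (x (4*k+2), x (4*k+4)))"

definition block_coord :: "nat \<Rightarrow> ('a \<times> 'a) \<times> ('a \<times> 'a) \<Rightarrow> 'a" where
  "block_coord r v = (if r = 0 then fst (fst v) else if r = 1 then fst (snd v)
     else if r = 2 then snd (fst v) else snd (snd v))"

definition blockwise ::
    "(nat \<Rightarrow> ('a \<times> 'a) \<times> ('a \<times> 'a) \<Rightarrow> ('a \<times> 'a) \<times> ('a \<times> 'a)) \<Rightarrow> (nat \<Rightarrow> 'a) \<Rightarrow> nat \<Rightarrow> 'a" where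
  "blockwise B x n = (if n = 0 then x 0
     else block_coord ((n - 1) mod 4) (B ((n - 1) div 4) (block x ((n - 1) div 4))))"

lemma blockwise_0 [simp]: "blockwise B x 0 = x 0"
  by (simp add: blockwise_def)

lemma block_blockwise [simp]: "block (blockwise B x) k = B k (block x k)"
proof -
  have "(4 * k + j) div 4 = k" "(4 * k + j) mod 4 = j" if "j < 4" for j
    using that by auto
  from this[of 0] this[of 1] this[of 2] this[of 3] show ?thesis
    unfolding block_def blockwise_def by (simp add: block_coord_def prod_eq_iff)
qed

lemma block_eqI:
  assumes "x 0 = y 0" and "\<And>k. block x k = block y k"
  shows "x = y"
proof
  fix n
  show "x n = y n"
  proof (cases n)
    case (Suc m)
    define k where "k = m div 4"
    have "Suc m = 4*k+1 \<or> Suc m = 4*k+2 \<or> Suc m = 4*k+3 \<or> Suc m = 4*k+4"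
      unfolding k_def by linarith
    moreover have "x (4*k+1) = y (4*k+1)" "x (4*k+2) = y (4*k+2)"
      "x (4*k+3) = y (4*k+3)" "x (4*k+4) = y (4*k+4)"
      using assms(2)[of k] by (simp_all add: block_def)
    ultimately show ?thesis unfolding Suc by metis
  qed (use assms(1) in simp)
qed

lemma blockwise_inverse:
  assumes "\<And>k v. B k (B' k v) = v"
  shows "blockwise B (blockwise B' x) = x"
  by (rule block_eqI) (simp_all add: assms)

lemma block_emb: "block (emb h) k = 0"
  by (simp add: block_def emb_def zero_prod_def)

lemma blockwise_emb:
  assumes "\<And>k. B k 0 = 0"
  shows "blockwise B (emb h) = emb h"
  by (rule block_eqI) (simp_all add: assms block_emb)

lemma norm_block:
  "(norm (block x k))\<^sup>2 = (norm (x (4*k+1)))\<^sup>2 + (norm (x (4*k+2)))\<^sup>2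
     + (norm (x (4*k+3)))\<^sup>2 + (norm (x (4*k+4)))\<^sup>2"
  by (simp add: block_def norm_Pair)

lemma blockwise_l2:
  fixes x :: "nat \<Rightarrow> 'a::complex_hilbert"
  assumes x: "x \<in> l2" and norm_B: "\<And>k v. norm (B k v) = norm v"
  shows "blockwise B x \<in> l2" and "(\<Sum>n. (norm (blockwise B x n))\<^sup>2) = (\<Sum>n. (norm (x n))\<^sup>2)"
proof -
  have "(norm (blockwise B x (4*k+1)))\<^sup>2 + (norm (blockwise B x (4*k+2)))\<^sup>2
      + (norm (blockwise B x (4*k+3)))\<^sup>2 + (norm (blockwise B x (4*k+4)))\<^sup>2
    = (norm (x (4*k+1)))\<^sup>2 + (norm (x (4*k+2)))\<^sup>2 + (norm (x (4*k+3)))\<^sup>2 + (norm (x (4*k+4)))\<^sup>2"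
    for k
    using norm_block[of "blockwise B x" k] norm_block[of x k] norm_B[of k "block x k"] by simp
  note blocks = summable_blocks4_nonneg[of "\<lambda>n. (norm (blockwise B x n))\<^sup>2"
      "\<lambda>n. (norm (x n))\<^sup>2", OF _ x[unfolded l2_def, simplified] _ _ this]
  show "blockwise B x \<in> l2" and "(\<Sum>n. (norm (blockwise B x n))\<^sup>2) = (\<Sum>n. (norm (x n))\<^sup>2)"
    using blocks by (simp_all add: l2_def)
qed

lemma block_l2add: "block (l2add x y) k = block x k + block y k"
  by (simp add: block_def l2add_def)

lemma block_l2scale: "block (l2scale c x) k = cscale c (block x k)"
  by (simp add: block_def l2scale_def)

lemma cinner_block:
  "cinner (block x k) (block y k) = cinner (x (4*k+1)) (y (4*k+1)) + cinner (x (4*k+2)) (y (4*k+2))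
     + cinner (x (4*k+3)) (y (4*k+3)) + cinner (x (4*k+4)) (y (4*k+4))"
  by (simp add: block_def)

lemma bop_on_blockwise:
  fixes B :: "nat \<Rightarrow> ('a::complex_hilbert \<times> 'a) \<times> ('a \<times> 'a) \<Rightarrow> ('a \<times> 'a) \<times> ('a \<times> 'a)"
  assumes "\<And>k v. norm (B k v) = norm v" and "\<And>k v w. B k (v + w) = B k v + B k w"
    and "\<And>k c v. B k (cscale c v) = cscale c (B k v)"
  shows "bop_on l2 (blockwise B)"
proof -
  have "blockwise B (l2add x y) = l2add (blockwise B x) (blockwise B y)" for x y
    by (rule block_eqI) (simp add: l2add_def, simp add: block_l2add assms(2))
  moreover have "blockwise B (l2scale c x) = l2scale c (blockwise B x)" for c x
    by (rule block_eqI) (simp add: l2scale_def, simp add: block_l2scale assms(3))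
  ultimately show ?thesis
    using blockwise_l2[OF _ assms(1)] unfolding bop_on_def l2norm_def
    by (auto intro!: exI[of _ 1])
qed

lemma is_adj_on_blockwise:
  fixes B B' :: "nat \<Rightarrow> ('a::complex_hilbert \<times> 'a) \<times> ('a \<times> 'a) \<Rightarrow> ('a \<times> 'a) \<times> ('a \<times> 'a)"
  assumes "bop_on l2 (blockwise B')"
    and norm_B: "\<And>k v. norm (B k v) = norm v" and norm_B': "\<And>k v. norm (B' k v) = norm v"
    and adj: "\<And>k v w. cinner (B k v) w = cinner v (B' k w)"
  shows "is_adj_on l2 (blockwise B) (blockwise B')"
  unfolding is_adj_on_def
proof (intro conjI ballI assms(1))
  fix x y :: "nat \<Rightarrow> 'a"
  assume "x \<in> l2" "y \<in> l2"
  then have "summable (\<lambda>n. cinner (blockwise B x n) (y n))"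
    and "summable (\<lambda>n. cinner (x n) (blockwise B' y n))"
    using blockwise_l2(1) norm_B norm_B' by (blast intro: summable_cinner_l2)+
  note sums = suminf_blocks4[OF this(1)] suminf_blocks4[OF this(2)]
  have "cinner (blockwise B x (4*k+1)) (y (4*k+1)) + cinner (blockwise B x (4*k+2)) (y (4*k+2))
      + cinner (blockwise B x (4*k+3)) (y (4*k+3)) + cinner (blockwise B x (4*k+4)) (y (4*k+4))
    = cinner (x (4*k+1)) (blockwise B' y (4*k+1)) + cinner (x (4*k+2)) (blockwise B' y (4*k+2))
      + cinner (x (4*k+3)) (blockwise B' y (4*k+3)) + cinner (x (4*k+4)) (blockwise B' y (4*k+4))"
    for k
  proof -
    have "cinner (block (blockwise B x) k) (block y k) = cinner (block x k) (block (blockwise B' y) k)"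
      by (simp add: adj)
    then show ?thesis by (simp only: cinner_block)
  qed
  then show "l2cinner (blockwise B x) y = l2cinner x (blockwise B' y)"
    unfolding l2cinner_def sums by simp
qed

section \<open>Isometric lifts of contractions to \<open>\<ell>\<^sup>2(\<nat>, H)\<close>\<close>

text \<open>With \<open>A = T\<^sup>*\<close> and the defect operator \<open>D = (I - T T\<^sup>*)\<^sup>1\<^sup>/\<^sup>2\<close>, \<open>isometric_lift A D\<close> is an
  isometry whose adjoint \<open>coisometric_lift T D\<close> is a co-isometric extension of \<open>T\<close>.\<close>

definition isometric_lift :: "('h::complex_hilbert \<Rightarrow> 'h) \<Rightarrow> ('h \<Rightarrow> 'h) \<Rightarrow> (nat \<Rightarrow> 'h) \<Rightarrow> nat \<Rightarrow> 'h" where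
  "isometric_lift A D h n =
     (if n = 0 then A (h 0) else if n = 1 then D (h 0) else if n = 2 then 0 else h (n - 2))"

definition coisometric_lift :: "('h::complex_hilbert \<Rightarrow> 'h) \<Rightarrow> ('h \<Rightarrow> 'h) \<Rightarrow> (nat \<Rightarrow> 'h) \<Rightarrow> nat \<Rightarrow> 'h" where
  "coisometric_lift T D y n = (if n = 0 then T (y 0) + D (y 1) else y (n + 2))"

locale defect_operator =
  fixes T A D :: "'h::complex_hilbert \<Rightarrow> 'h"
  assumes bop_T: "bop T" and bop_A: "bop A" and bop_D: "bop D"
    and adjoint: "\<And>x y. inner (T x) y = inner x (A y)"
    and self_adjoint: "\<And>x y. inner (D x) y = inner x (D y)"
    and square: "\<And>x. D (D x) = x - T (A x)"
    and contraction: "\<And>x. norm (T x) \<le> norm x"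
begin

sublocale T: bounded_linear T using bop_T by (simp add: bop_def)
sublocale A: bounded_linear A using bop_A by (simp add: bop_def)
sublocale D: bounded_linear D using bop_D by (simp add: bop_def)

lemma cinner_adjoint: "cinner (T x) y = cinner x (A y)"
  by (rule cinner_adjoint_if_inner[OF bop_T adjoint])

lemma cinner_self_adjoint: "cinner (D x) y = cinner x (D y)"
  by (rule cinner_adjoint_if_inner[OF bop_D self_adjoint])

lemma coisometric_lift_emb: "coisometric_lift T D (emb h) = emb (T h)"
  by (simp add: fun_eq_iff coisometric_lift_def emb_def)

lemma norm_adjoint_defect: "(norm (A y))\<^sup>2 + (norm (D y))\<^sup>2 = (norm y)\<^sup>2"
proof -
  have "(norm (D y))\<^sup>2 = inner y (D (D y))" by (simp add: power2_norm_eq_inner self_adjoint)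
  also have "\<dots> = (norm y)\<^sup>2 - inner (T (A y)) y"
    by (simp add: square inner_diff_right power2_norm_eq_inner inner_commute)
  also have "inner (T (A y)) y = (norm (A y))\<^sup>2" by (simp add: adjoint power2_norm_eq_inner)
  finally show ?thesis by simp
qed

lemma norm_defect_le: "norm (D y) \<le> norm y"
proof (rule power2_le_imp_le)
  show "(norm (D y))\<^sup>2 \<le> (norm y)\<^sup>2"
    using norm_adjoint_defect[of y] zero_le_power2[of "norm (A y)"] by linarith
qed simp

lemma isometric_lift_l2:
  assumes h: "h \<in> l2"
  shows "isometric_lift A D h \<in> l2"
    and "(\<Sum>n. (norm (isometric_lift A D h n))\<^sup>2) = (\<Sum>n. (norm (h n))\<^sup>2)"
proof -
  have summable_h: "summable (\<lambda>n. (norm (h n))\<^sup>2)" using h by (simp add: l2_def)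
  have shift: "(\<lambda>n. (norm (isometric_lift A D h (n + 3)))\<^sup>2) = (\<lambda>n. (norm (h (n + 1)))\<^sup>2)"
    by (simp add: isometric_lift_def)
  have "summable (\<lambda>n. (norm (h (n + 1)))\<^sup>2)" using summable_h by (subst summable_iff_shift)
  then have "summable (\<lambda>n. (norm (isometric_lift A D h (n + 3)))\<^sup>2)" by (simp only: shift)
  then have summable: "summable (\<lambda>n. (norm (isometric_lift A D h n))\<^sup>2)"
    by (rule summable_iff_shift[THEN iffD1])
  then show "isometric_lift A D h \<in> l2" by (simp add: l2_def)
  have "(\<Sum>n. (norm (isometric_lift A D h n))\<^sup>2)
      = (\<Sum>n. (norm (h (n + 1)))\<^sup>2) + ((norm (A (h 0)))\<^sup>2 + (norm (D (h 0)))\<^sup>2)"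
    using suminf_split_initial_segment[OF summable, of 3] shift
    by (simp add: isometric_lift_def numeral_3_eq_3)
  also have "\<dots> = (\<Sum>n. (norm (h n))\<^sup>2)"
    using suminf_split_initial_segment[OF summable_h, of 1] by (simp add: norm_adjoint_defect)
  finally show "(\<Sum>n. (norm (isometric_lift A D h n))\<^sup>2) = (\<Sum>n. (norm (h n))\<^sup>2)" .
qed

lemma coisometric_lift_l2:
  assumes y: "y \<in> l2"
  shows "coisometric_lift T D y \<in> l2"
    and "(\<Sum>n. (norm (coisometric_lift T D y n))\<^sup>2) \<le> 2 * (\<Sum>n. (norm (y n))\<^sup>2)"
proof -
  have summable_y: "summable (\<lambda>n. (norm (y n))\<^sup>2)" using y by (simp add: l2_def)
  have shift: "(\<lambda>n. (norm (coisometric_lift T D y (n + 1)))\<^sup>2) = (\<lambda>n. (norm (y (n + 3)))\<^sup>2)"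
    by (simp add: coisometric_lift_def numeral_3_eq_3)
  have summable_y3: "summable (\<lambda>n. (norm (y (n + 3)))\<^sup>2)"
    using summable_y by (subst summable_iff_shift)
  then have "summable (\<lambda>n. (norm (coisometric_lift T D y (n + 1)))\<^sup>2)" by (simp only: shift)
  then have summable: "summable (\<lambda>n. (norm (coisometric_lift T D y n))\<^sup>2)"
    by (rule summable_iff_shift[THEN iffD1])
  then show "coisometric_lift T D y \<in> l2" by (simp add: l2_def)
  have "(\<Sum>n. (norm (coisometric_lift T D y n))\<^sup>2)
      = (\<Sum>n. (norm (y (n + 3)))\<^sup>2) + (norm (T (y 0) + D (y 1)))\<^sup>2"
    using suminf_split_initial_segment[OF summable, of 1] shift by (simp add: coisometric_lift_def)
  moreover have "(\<Sum>n. (norm (y n))\<^sup>2)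
      = (\<Sum>n. (norm (y (n + 3)))\<^sup>2) + ((norm (y 0))\<^sup>2 + (norm (y 1))\<^sup>2 + (norm (y 2))\<^sup>2)"
    using suminf_split_initial_segment[OF summable_y, of 3] by (simp add: eval_nat_numeral)
  moreover have "(norm (T (y 0) + D (y 1)))\<^sup>2 \<le> 2 * (norm (y 0))\<^sup>2 + 2 * (norm (y 1))\<^sup>2"
  proof -
    have "(norm (T (y 0) + D (y 1)))\<^sup>2 \<le> 2 * (norm (T (y 0)))\<^sup>2 + 2 * (norm (D (y 1)))\<^sup>2"
      using parallelogram_law[of "T (y 0)" "D (y 1)"] zero_le_power2[of "norm (T (y 0) - D (y 1))"]
      by linarith
    also have "\<dots> \<le> 2 * (norm (y 0))\<^sup>2 + 2 * (norm (y 1))\<^sup>2"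
      using contraction[of "y 0"] norm_defect_le[of "y 1"]
      by (intro add_mono mult_left_mono power_mono) auto
    finally show ?thesis .
  qed
  moreover have "0 \<le> (\<Sum>n. (norm (y (n + 3)))\<^sup>2)" by (rule suminf_nonneg[OF summable_y3]) simp
  ultimately show "(\<Sum>n. (norm (coisometric_lift T D y n))\<^sup>2) \<le> 2 * (\<Sum>n. (norm (y n))\<^sup>2)"
    using zero_le_power2[of "norm (y 2)"] by linarith
qed

lemma coisometric_lift_adjoint:
  assumes y: "y \<in> l2" and h: "h \<in> l2"
  shows "l2cinner (coisometric_lift T D y) h = l2cinner y (isometric_lift A D h)"
proof -
  have s1: "summable (\<lambda>n. cinner (coisometric_lift T D y n) (h n))"
    by (rule summable_cinner_l2[OF coisometric_lift_l2(1)[OF y] h])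
  have s2: "summable (\<lambda>n. cinner (y n) (isometric_lift A D h n))"
    by (rule summable_cinner_l2[OF y isometric_lift_l2(1)[OF h]])
  have "l2cinner (coisometric_lift T D y) h
      = (\<Sum>n. cinner (y (n + 3)) (h (n + 1))) + cinner (T (y 0) + D (y 1)) (h 0)"
    unfolding l2cinner_def using suminf_split_initial_segment[OF s1, of 1]
    by (simp add: coisometric_lift_def numeral_3_eq_3)
  also have "\<dots> = (\<Sum>n. cinner (y (n + 3)) (h (n + 1))) + (cinner (y 0) (A (h 0)) + cinner (y 1) (D (h 0)))"
    by (simp add: cinner_add_left cinner_adjoint cinner_self_adjoint)
  also have "\<dots> = l2cinner y (isometric_lift A D h)"
    unfolding l2cinner_def using suminf_split_initial_segment[OF s2, of 3]
    by (simp add: isometric_lift_def numeral_3_eq_3)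
  finally show ?thesis .
qed

lemma coisometric_lift_isometric_lift: "coisometric_lift T D (isometric_lift A D h) = h"
  by (simp add: fun_eq_iff coisometric_lift_def isometric_lift_def square)

lemma bop_on_isometric_lift: "bop_on l2 (isometric_lift A D)"
  unfolding bop_on_def
proof (intro conjI ballI allI)
  show "\<exists>C. \<forall>x\<in>l2. l2norm (isometric_lift A D x) \<le> C * l2norm x"
    by (intro exI[of _ 1]) (simp add: l2norm_def isometric_lift_l2)
qed (simp_all add: fun_eq_iff isometric_lift_l2 isometric_lift_def l2add_def l2scale_def A.add D.add
    bop_cscale[OF bop_A] bop_cscale[OF bop_D])

lemma bop_on_coisometric_lift: "bop_on l2 (coisometric_lift T D)"
  unfolding bop_on_def
proof (intro conjI ballI allI)
  show "\<exists>C. \<forall>x\<in>l2. l2norm (coisometric_lift T D x) \<le> C * l2norm x"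
    using coisometric_lift_l2(2)
    by (intro exI[of _ "sqrt 2"]) (simp add: l2norm_def real_sqrt_mult[symmetric])
qed (simp_all add: fun_eq_iff coisometric_lift_l2 coisometric_lift_def l2add_def l2scale_def T.add D.add
    bop_cscale[OF bop_T] bop_cscale[OF bop_D] cscale_add_right)

lemma is_adj_on_coisometric_lift: "is_adj_on l2 (coisometric_lift T D) (isometric_lift A D)"
  unfolding is_adj_on_def using bop_on_isometric_lift coisometric_lift_adjoint by blast

end

lemma defect_operator_exists:
  fixes T :: "'h::complex_hilbert \<Rightarrow> 'h"
  assumes "contraction T"
  shows "\<exists>A D. defect_operator T A D"
proof -
  have bop_T: "bop T" and contr: "\<And>x. norm (T x) \<le> norm x"
    using assms by (auto simp: contraction_def)
  obtain A where bop_A: "bop A" and adj: "\<forall>x y. inner (T x) y = inner x (A y)"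
    using bop_adjoint_exists[OF bop_T] by blast
  have "inner (T (A x)) y = inner x (T (A y))" for x y
    by (metis adj inner_commute)
  moreover have "norm (T (A x)) \<le> norm x" for x
  proof -
    have "norm (A x) \<le> norm x" using adjoint_norm_le[of T A 1 x] adj contr by simp
    with contr[of "A x"] show ?thesis by (rule order_trans)
  qed
  ultimately obtain D where "bop D" "\<forall>x y. inner (D x) y = inner x (D y)"
    "\<forall>x. D (D x) = x - T (A x)"
    using sqrt_id_minus_exists[OF bop_comp[OF bop_T bop_A]] by blast
  then have "defect_operator T A D"
    using bop_T bop_A adj contr by unfold_locales auto
  then show ?thesis by blast
qed

section \<open>The dilation\<close>

definition extend_by_scalar :: "('h \<Rightarrow> 'h) \<Rightarrow> complex \<Rightarrow> (nat \<Rightarrow> 'h::complex_hilbert) \<Rightarrow> nat \<Rightarrow> 'h" where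
  "extend_by_scalar P c x n = (if n = 0 then P (x 0) else cscale c (x n))"

lemma extend_by_scalar_emb: "extend_by_scalar P c (emb h) = emb (P h)"
  by (simp add: fun_eq_iff extend_by_scalar_def emb_def)

lemma bop_on_extend_by_scalar:
  assumes "bop P" and norm_P: "\<And>a. norm (P a) = norm a" and "cmod c = 1"
  shows "bop_on l2 (extend_by_scalar P c)"
proof -
  interpret P: bounded_linear P using assms(1) by (simp add: bop_def)
  have norm_eq: "norm (extend_by_scalar P c x n) = norm (x n)" for x n
    by (simp add: extend_by_scalar_def norm_P assms(3))
  show ?thesis unfolding bop_on_def
  proof (intro conjI ballI allI)
    show "extend_by_scalar P c x \<in> l2" if "x \<in> l2" for x using that by (simp add: l2_def norm_eq)
    show "extend_by_scalar P c (l2add x y) = l2add (extend_by_scalar P c x) (extend_by_scalar P c y)"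
      for x y by (simp add: fun_eq_iff extend_by_scalar_def l2add_def P.add cscale_add_right)
    show "extend_by_scalar P c (l2scale d x) = l2scale d (extend_by_scalar P c x)" for d x
      by (simp add: fun_eq_iff extend_by_scalar_def l2scale_def bop_cscale[OF assms(1)]
          cscale_mult mult.commute)
    show "\<exists>C. \<forall>x\<in>l2. l2norm (extend_by_scalar P c x) \<le> C * l2norm x"
      by (intro exI[of _ 1]) (simp add: l2norm_def norm_eq)
  qed
qed

lemma unitary_opE:
  assumes "unitary_op Q"
  obtains Q' where "bop Q" and "bop Q'" and "\<And>x y. inner (Q x) y = inner x (Q' y)"
    and "\<And>x. Q' (Q x) = x" and "\<And>x. Q (Q' x) = x" and "unitary_op Q'"
proof -
  obtain Q' where Q: "bop Q" and Q': "bop Q'" and adj: "\<And>x y. inner (Q x) y = inner x (Q' y)"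
    and "\<And>x. Q' (Q x) = x" and "\<And>x. Q (Q' x) = x"
    using assms is_adj_iff_inner unfolding unitary_op_def by metis
  moreover have "is_adj Q' Q"
    using is_adj_iff_inner[OF Q'] adj by (metis inner_commute)
  ultimately show ?thesis using that unfolding unitary_op_def by blast
qed

lemma norm_unitary_op:
  assumes "unitary_op Q"
  shows "norm (Q a) = norm a"
proof -
  obtain Q' where "\<And>x y. inner (Q x) y = inner x (Q' y)" and "\<And>x. Q' (Q x) = x"
    using unitary_opE[OF assms] by metis
  then have "inner (Q a) (Q a) = inner a a" by simp
  then show ?thesis by (simp add: norm_eq_sqrt_inner)
qed

lemma unitary_on_extend_by_scalar:
  assumes "unitary_op Q" and "cmod q = 1"
  shows "unitary_on l2 (extend_by_scalar Q q)"
proof -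
  obtain Q' where Q: "bop Q" and Q': "bop Q'" and adj: "\<And>x y. inner (Q x) y = inner x (Q' y)"
    and Q'_Q: "\<And>x. Q' (Q x) = x" and Q_Q': "\<And>x. Q (Q' x) = x"
    and "unitary_op Q'"
    using unitary_opE[OF assms(1)] by metis
  then have "bop_on l2 (extend_by_scalar Q' (cnj q))"
    using Q' norm_unitary_op assms(2) by (intro bop_on_extend_by_scalar) auto
  moreover have "cinner (Q a) b = cinner a (Q' b)" for a b
    by (rule cinner_adjoint_if_inner[OF Q adj])
  then have "l2cinner (extend_by_scalar Q q x) y = l2cinner x (extend_by_scalar Q' (cnj q) y)" for x y
    by (simp add: l2cinner_def extend_by_scalar_def cinner_cscale_left cinner_cscale_right
        if_distrib[of "\<lambda>a. cinner a _"] if_distrib[of "cinner _"] cong: if_cong)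
  moreover have "cnj q * q = 1" and "q * cnj q = 1"
    using assms(2) cnj_sgn_mult[of q] by (simp_all add: sgn_div_norm mult.commute)
  then have "extend_by_scalar Q q (extend_by_scalar Q' (cnj q) y) = y"
    and "extend_by_scalar Q' (cnj q) (extend_by_scalar Q q y) = y" for y
    by (simp_all add: fun_eq_iff extend_by_scalar_def Q'_Q Q_Q' cscale_mult)
  ultimately show ?thesis
    using bop_on_extend_by_scalar[OF Q norm_unitary_op[OF assms(1)] assms(2)]
    unfolding unitary_on_def is_adj_on_def by blast
qed

lemma reduces_on_extend_by_scalar:
  fixes P :: "'h::complex_hilbert \<Rightarrow> 'h"
  assumes "bop P" and "bop_on l2 (extend_by_scalar P c)"
  shows "reduces_on l2 (range emb) (extend_by_scalar P c)"
  unfolding reduces_on_def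
proof (intro conjI ballI)
  show "extend_by_scalar P c x \<in> range emb" if "x \<in> range emb" for x
    using that by (auto simp: extend_by_scalar_emb)
  fix x :: "nat \<Rightarrow> 'h"
  assume x: "x \<in> orth_in l2 (range emb)"
  then have "cinner (x 0) (x 0) = 0" by (auto simp: orth_in_def l2cinner_emb)
  then have "x 0 = 0" by (simp add: cinner_self_eq_zero_iff)
  then show "extend_by_scalar P c x \<in> orth_in l2 (range emb)"
    using x assms by (auto simp: orth_in_def bop_on_def l2cinner_emb extend_by_scalar_def bop_def
        linear_simps)
qed

lemma funpow_emb:
  fixes W :: "(nat \<Rightarrow> 'a::complex_hilbert) \<Rightarrow> nat \<Rightarrow> 'a"
  assumes "\<And>h. W (emb h) = emb (T h)"
  shows "(W ^^ n) (emb h) = emb ((T ^^ n) h)"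
  by (induction n) (simp_all add: assms)

lemma PH_emb: "PH (emb h) = emb h"
  by (simp add: PH_def emb_def)

lemma block_coisometric_lift_coisometric_lift:
  "block (coisometric_lift T2 D2 (coisometric_lift T1 D1 z)) k = block z (Suc k)"
  by (simp add: block_def coisometric_lift_def) (intro conjI arg_cong[where f=z]; simp)

lemma block_extend_by_scalar: "block (extend_by_scalar P c x) k = cscale c (block x k)"
  by (simp add: block_def extend_by_scalar_def)

text \<open>A product of two co-isometric lifts shifts blocks by one place, so the extra factor \<open>c\<close>
  per block is what produces the scalar part of \<open>Q \<oplus> q I\<close> in the twisted commutation
  relation.\<close>

definition twisted_blockwise :: "complex \<Rightarrow> (('a::complex_hilbert \<times> 'a) \<times> ('a \<times> 'a) \<Rightarrow> ('a \<times> 'a) \<times> ('a \<times> 'a))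
    \<Rightarrow> (nat \<Rightarrow> 'a) \<Rightarrow> nat \<Rightarrow> 'a" where
  "twisted_blockwise c G = blockwise (\<lambda>k v. cscale (c ^ Suc k) (G v))"

lemma twisted_blockwise_unitary:
  fixes G G' :: "('a::complex_hilbert \<times> 'a) \<times> ('a \<times> 'a) \<Rightarrow> ('a \<times> 'a) \<times> ('a \<times> 'a)"
  assumes G: "bop G" and G': "bop G'" and adj: "\<And>x y. inner (G x) y = inner x (G' y)"
    and G'_G: "\<And>x. G' (G x) = x" and G_G': "\<And>x. G (G' x) = x" and c: "cmod c = 1"
  shows "bop_on l2 (twisted_blockwise c G)"
    and "is_adj_on l2 (twisted_blockwise c G) (twisted_blockwise (cnj c) G')"
    and "twisted_blockwise c G (twisted_blockwise (cnj c) G' x) = x"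
    and "twisted_blockwise c G (emb h) = emb h"
proof -
  have adj': "inner (G' x) y = inner x (G y)" for x y by (metis adj inner_commute)
  have norm_G: "norm (G v) = norm v" and norm_G': "norm (G' v) = norm v" for v
    by (simp_all add: norm_eq_sqrt_inner adj adj' G'_G G_G')
  have c_cnj: "c * cnj c = 1" using c cnj_sgn_mult[of c] by (simp add: sgn_div_norm mult.commute)
  have bop_on: "bop_on l2 (twisted_blockwise d F)" if "bop F" "\<And>v. norm (F v) = norm v" "cmod d = 1"
    for F :: "('a \<times> 'a) \<times> ('a \<times> 'a) \<Rightarrow> ('a \<times> 'a) \<times> ('a \<times> 'a)" and d
    unfolding twisted_blockwise_def using that
    by (intro bop_on_blockwise)
      (simp_all add: norm_mult norm_power bop_def linear_add bounded_linear.linear cscale_add_right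
        bop_cscale cscale_mult mult.commute)
  show "bop_on l2 (twisted_blockwise c G)" using G norm_G c by (rule bop_on)
  show "is_adj_on l2 (twisted_blockwise c G) (twisted_blockwise (cnj c) G')"
    unfolding twisted_blockwise_def
    by (rule is_adj_on_blockwise[OF bop_on[OF G' norm_G', unfolded twisted_blockwise_def]])
      (simp_all add: c norm_mult norm_power norm_G norm_G' cinner_cscale_left cinner_cscale_right
        cinner_adjoint_if_inner[OF G adj])
  have "c ^ Suc k * cnj c ^ Suc k = 1" for k
    by (simp only: power_mult_distrib[symmetric] c_cnj power_one)
  then show "twisted_blockwise c G (twisted_blockwise (cnj c) G' x) = x"
    unfolding twisted_blockwise_def
    by (intro blockwise_inverse) (simp add: bop_cscale[OF G] G_G' cscale_mult)
  show "twisted_blockwise c G (emb h) = emb h"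
    unfolding twisted_blockwise_def
    by (rule blockwise_emb) (simp add: linear_0 bounded_linear.linear G[unfolded bop_def])
qed

locale twisted_contractions =
  T1: defect_operator T1 A1 D1 + T2: defect_operator T2 A2 D2
  for T1 A1 D1 T2 A2 D2 :: "'h::complex_hilbert \<Rightarrow> 'h" +
  fixes Q :: "'h \<Rightarrow> 'h"
  assumes unitary_Q: "unitary_op Q"
    and twisted_commute: "\<And>x. T2 (T1 x) = T1 (T2 (Q x))"
begin

lemma norm_adjoints_commute: "norm (A1 (A2 h)) = norm (A2 (A1 h))"
proof -
  obtain Q' where adj: "\<And>x y. inner (Q x) y = inner x (Q' y)" and "unitary_op Q'"
    using unitary_opE[OF unitary_Q] by metis
  have "inner x (A1 (A2 h)) = inner x (Q' (A2 (A1 h)))" for x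
    by (simp add: T1.adjoint[symmetric] T2.adjoint[symmetric] twisted_commute)
      (simp add: T1.adjoint T2.adjoint adj)
  then have "A1 (A2 h) = Q' (A2 (A1 h))" using vector_eq_ldot by blast
  then show ?thesis using norm_unitary_op[OF \<open>unitary_op Q'\<close>] by simp
qed

lemma norm_defects_eq: "norm (D1 (A2 h), D2 h) = norm (D2 (A1 h), D1 h)"
proof -
  have "(norm (D1 (A2 h)))\<^sup>2 + (norm (D2 h))\<^sup>2 = (norm h)\<^sup>2 - (norm (A1 (A2 h)))\<^sup>2"
    using T1.norm_adjoint_defect[of "A2 h"] T2.norm_adjoint_defect[of h] by simp
  also have "\<dots> = (norm (D2 (A1 h)))\<^sup>2 + (norm (D1 h))\<^sup>2"
    using T2.norm_adjoint_defect[of "A1 h"] T1.norm_adjoint_defect[of h]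
    by (simp add: norm_adjoints_commute)
  finally show ?thesis by (simp add: norm_Pair)
qed

lemma unitary_swapping_defects_exists:
  "\<exists>G G'. bop G \<and> bop G' \<and> (\<forall>x y. inner (G x) y = inner x (G' y))
    \<and> (\<forall>x. G (G' x) = x) \<and> (\<forall>x. G' (G x) = x)
    \<and> (\<forall>h. G ((D1 (A2 h), D2 h), 0::'h \<times> 'h) = ((D2 (A1 h), D1 h), 0::'h \<times> 'h))"
proof -
  have "bounded_linear (\<lambda>h. (D1 (A2 h), D2 h))" and "bounded_linear (\<lambda>h. (D2 (A1 h), D1 h))"
    using bounded_linear_compose[OF T1.D.bounded_linear T2.A.bounded_linear]
      bounded_linear_compose[OF T2.D.bounded_linear T1.A.bounded_linear]
    by (auto intro!: bounded_linear_Pair T1.D.bounded_linear T2.D.bounded_linear simp: o_def)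
  moreover have "(D1 (A2 (iunit h)), D2 (iunit h)) = iunit (D1 (A2 h), D2 h)"
    and "(D2 (A1 (iunit h)), D1 (iunit h)) = iunit (D2 (A1 h), D1 h)" for h
    by (simp_all add: bop_iunit T1.bop_D T2.bop_D T1.bop_A T2.bop_A)
  ultimately show ?thesis
    using unitary_extending_isometry[of "\<lambda>h. (D1 (A2 h), D2 h)" "\<lambda>h. (D2 (A1 h), D1 h)"]
      norm_defects_eq by simp
qed

end

locale twisted_dilation = twisted_contractions +
  fixes G G' :: "('h::complex_hilbert \<times> 'h) \<times> ('h \<times> 'h) \<Rightarrow> ('h \<times> 'h) \<times> ('h \<times> 'h)"
    and q :: complex
  assumes bop_G: "bop G" and bop_G': "bop G'" and G_adjoint: "\<And>x y. inner (G x) y = inner x (G' y)"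
    and G_G': "\<And>x. G (G' x) = x" and G'_G: "\<And>x. G' (G x) = x"
    and G_defects: "\<And>h. G ((D1 (A2 h), D2 h), 0) = ((D2 (A1 h), D1 h), 0)"
    and norm_q: "cmod q = 1"
begin

definition "W1 = (\<lambda>x. coisometric_lift T1 D1 (twisted_blockwise q G' x))"
definition "W2 = (\<lambda>x. twisted_blockwise (cnj q) G (coisometric_lift T2 D2 x))"

lemma G'_adjoint: "inner (G' x) y = inner x (G y)"
  by (metis G_adjoint inner_commute)

lemma norm_cnj_q: "cmod (cnj q) = 1"
  using norm_q by simp

lemmas G_blocks =
  twisted_blockwise_unitary[OF bop_G bop_G' G_adjoint G'_G G_G' norm_cnj_q, unfolded complex_cnj_cnj]
lemmas G'_blocks = twisted_blockwise_unitary[OF bop_G' bop_G G'_adjoint G_G' G'_G norm_q]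

text \<open>The adjoint form of \<open>G_defects\<close>: \<open>(a, b) \<mapsto> T2 (D1 a) + D2 b\<close> and
  \<open>(a, b) \<mapsto> T1 (D2 a) + D1 b\<close> are the adjoints of the two maps that \<open>G\<close> intertwines.\<close>

lemma defects_G':
  "T2 (D1 (fst (fst (G' v)))) + D2 (snd (fst (G' v))) = T1 (D2 (fst (fst v))) + D1 (snd (fst v))"
proof -
  obtain a b c where v': "G' v = ((a, b), c)" by (metis prod.collapse)
  obtain a' b' c' where v: "v = ((a', b'), c')" by (metis prod.collapse)
  have "inner (T2 (D1 a) + D2 b) h = inner (T1 (D2 a') + D1 b') h" for h
  proof -
    have "inner (T2 (D1 a) + D2 b) h = inner (G' v) ((D1 (A2 h), D2 h), 0)"
      by (simp add: v' inner_add_left T2.adjoint T1.self_adjoint T2.self_adjoint)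
    also have "\<dots> = inner v (G ((D1 (A2 h), D2 h), 0))" by (rule G'_adjoint)
    also have "\<dots> = inner (T1 (D2 a') + D1 b') h"
      by (simp add: G_defects v inner_add_left T1.adjoint T1.self_adjoint T2.self_adjoint)
    finally show ?thesis .
  qed
  then show ?thesis using vector_eq_rdot by (auto simp: v v'[unfolded v])
qed

lemma coisometric_lifts_twisted_commute:
  "coisometric_lift T2 D2 (coisometric_lift T1 D1 (twisted_blockwise q G' x))
     = twisted_blockwise q G' (coisometric_lift T1 D1 (coisometric_lift T2 D2 (extend_by_scalar Q q x)))"
proof (rule block_eqI)
  define z where "z = twisted_blockwise q G' x"
  have z0: "z 0 = x 0" by (simp add: z_def twisted_blockwise_def)
  have "block z 0 = cscale q (G' (block x 0))" by (simp add: z_def twisted_blockwise_def)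
  then have z1: "z 1 = cscale q (fst (fst (G' (block x 0))))"
    and z3: "z 3 = cscale q (snd (fst (G' (block x 0))))"
    by (simp_all add: block_def prod_eq_iff fst_cscale snd_cscale)
  have G'_x0: "T2 (D1 (fst (fst (G' (block x 0))))) + D2 (snd (fst (G' (block x 0))))
      = T1 (D2 (x 1)) + D1 (x 3)"
    using defects_G'[of "block x 0"] by (simp add: block_def)
  have "coisometric_lift T2 D2 (coisometric_lift T1 D1 z) 0 = T2 (T1 (x 0)) + (T2 (D1 (z 1)) + D2 (z 3))"
    by (simp add: coisometric_lift_def z0 T2.T.add add.assoc numeral_3_eq_3)
  also have "T2 (D1 (z 1)) + D2 (z 3) = cscale q (T1 (D2 (x 1)) + D1 (x 3))"
    unfolding z1 z3 bop_cscale[OF T1.bop_D] bop_cscale[OF T2.bop_D] bop_cscale[OF T2.bop_T]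
      cscale_add_right[symmetric] G'_x0 ..
  also have "T2 (T1 (x 0)) + cscale q (T1 (D2 (x 1)) + D1 (x 3))
      = coisometric_lift T1 D1 (coisometric_lift T2 D2 (extend_by_scalar Q q x)) 0"
    by (simp add: coisometric_lift_def extend_by_scalar_def twisted_commute T1.T.add
        bop_cscale[OF T1.bop_T] bop_cscale[OF T1.bop_D] bop_cscale[OF T2.bop_D]
        cscale_add_right add.assoc numeral_3_eq_3)
  finally show "coisometric_lift T2 D2 (coisometric_lift T1 D1 (twisted_blockwise q G' x)) 0
      = twisted_blockwise q G' (coisometric_lift T1 D1 (coisometric_lift T2 D2 (extend_by_scalar Q q x))) 0"
    by (simp add: z_def twisted_blockwise_def)
next
  fix k
  show "block (coisometric_lift T2 D2 (coisometric_lift T1 D1 (twisted_blockwise q G' x))) k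
      = block (twisted_blockwise q G' (coisometric_lift T1 D1 (coisometric_lift T2 D2 (extend_by_scalar Q q x)))) k"
    by (simp add: twisted_blockwise_def block_coisometric_lift_coisometric_lift
        block_extend_by_scalar bop_cscale[OF bop_G'] cscale_mult mult.commute)
qed

lemma W2_W1: "W2 (W1 x) = W1 (W2 (extend_by_scalar Q q x))"
  by (simp add: W1_def W2_def coisometric_lifts_twisted_commute G_blocks(3) G'_blocks(3))

lemma W1_emb: "W1 (emb h) = emb (T1 h)"
  by (simp add: W1_def G'_blocks(4) T1.coisometric_lift_emb)

lemma W2_emb: "W2 (emb h) = emb (T2 h)"
  by (simp add: W2_def G_blocks(4) T2.coisometric_lift_emb)

lemma coisometry_on_W1: "coisometry_on l2 W1"
proof -
  have "bop_on l2 W1"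
    unfolding W1_def by (rule bop_on_comp[OF T1.bop_on_coisometric_lift G'_blocks(1) order_refl])
  moreover have "is_adj_on l2 W1 (\<lambda>y. twisted_blockwise (cnj q) G (isometric_lift A1 D1 y))"
    unfolding W1_def
    by (rule is_adj_on_comp[OF T1.is_adj_on_coisometric_lift G'_blocks(2) G'_blocks(1) order_refl])
  moreover have "W1 (twisted_blockwise (cnj q) G (isometric_lift A1 D1 y)) = y" for y
    by (simp add: W1_def G'_blocks(3) T1.coisometric_lift_isometric_lift)
  ultimately show ?thesis unfolding coisometry_on_def by blast
qed

lemma coisometry_on_W2: "coisometry_on l2 W2"
proof -
  have "bop_on l2 W2"
    unfolding W2_def by (rule bop_on_comp[OF G_blocks(1) T2.bop_on_coisometric_lift order_refl])
  moreover have "is_adj_on l2 W2 (\<lambda>y. isometric_lift A2 D2 (twisted_blockwise q G' y))"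
    unfolding W2_def
    by (rule is_adj_on_comp[OF G_blocks(2) T2.is_adj_on_coisometric_lift T2.bop_on_coisometric_lift
          order_refl])
  moreover have "W2 (isometric_lift A2 D2 (twisted_blockwise q G' y)) = y" for y
    by (simp add: W2_def G_blocks(3) T2.coisometric_lift_isometric_lift)
  ultimately show ?thesis unfolding coisometry_on_def by blast
qed

lemma dilation_exists:
  "\<exists>K W1 W2 Qb.
       closed_csubspace K \<and> range emb \<subseteq> K
     \<and> coisometry_on K W1 \<and> coisometry_on K W2 \<and> unitary_on K Qb
     \<and> reduces_on K (range emb) Qb
     \<and> (\<forall>h. Qb (emb h) = emb (Q h))
     \<and> (\<forall>x\<in>K. Qb x = (\<lambda>n. if n = 0 then Q (x 0) else cscale q (x n)))
     \<and> (\<forall>x\<in>K. W2 (W1 x) = W1 (W2 (Qb x)))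
     \<and> (\<forall>h. W1 (emb h) = emb (T1 h)) \<and> (\<forall>h. W2 (emb h) = emb (T2 h))
     \<and> (\<forall>n m h. emb ((T1 ^^ n) ((T2 ^^ m) h)) = PH ((W1 ^^ n) ((W2 ^^ m) (emb h))))
     \<and> (\<forall>n m h. emb ((T2 ^^ n) ((T1 ^^ m) h)) = PH ((W2 ^^ n) ((W1 ^^ m) (emb h))))"
proof (rule exI[of _ l2], rule exI[of _ W1], rule exI[of _ W2], rule exI[of _ "extend_by_scalar Q q"],
    intro conjI)
  have "unitary_on l2 (extend_by_scalar Q q)"
    by (rule unitary_on_extend_by_scalar[OF unitary_Q norm_q])
  then show "unitary_on l2 (extend_by_scalar Q q)"
    and "reduces_on l2 (range emb) (extend_by_scalar Q q)"
    using unitary_Q by (auto intro: reduces_on_extend_by_scalar simp: unitary_on_def unitary_op_def)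
  show "\<forall>h. extend_by_scalar Q q (emb h) = emb (Q h)"
    by (simp add: extend_by_scalar_emb)
  show "\<forall>x\<in>l2. extend_by_scalar Q q x = (\<lambda>n. if n = 0 then Q (x 0) else cscale q (x n))"
    by (simp add: fun_eq_iff extend_by_scalar_def)
  show "\<forall>n m h. emb ((T1 ^^ n) ((T2 ^^ m) h)) = PH ((W1 ^^ n) ((W2 ^^ m) (emb h)))"
    and "\<forall>n m h. emb ((T2 ^^ n) ((T1 ^^ m) h)) = PH ((W2 ^^ n) ((W1 ^^ m) (emb h)))"
    by (simp_all add: funpow_emb W1_emb W2_emb PH_emb)
qed (simp_all add: closed_csubspace_l2 emb_in_l2 image_subset_iff coisometry_on_W1 coisometry_on_W2
    W2_W1 W1_emb W2_emb)

end

theorem mainTheorem10: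
  fixes T1 T2 Q :: "'h::complex_hilbert \<Rightarrow> 'h"
  assumes "contraction T1" and "contraction T2" and "unitary_op Q"
    and "\<forall>x. T2 (T1 x) = T1 (T2 (Q x))"
  shows "\<forall>q. cmod q = 1 \<longrightarrow>
    (\<exists>K W1 W2 Qb.
       closed_csubspace K \<and> range emb \<subseteq> K
     \<and> coisometry_on K W1 \<and> coisometry_on K W2 \<and> unitary_on K Qb
     \<and> reduces_on K (range emb) Qb
     \<and> (\<forall>h. Qb (emb h) = emb (Q h))
     \<and> (\<forall>x\<in>K. Qb x = (\<lambda>n. if n = 0 then Q (x 0) else cscale q (x n)))
     \<and> (\<forall>x\<in>K. W2 (W1 x) = W1 (W2 (Qb x)))
     \<and> (\<forall>h. W1 (emb h) = emb (T1 h)) \<and> (\<forall>h. W2 (emb h) = emb (T2 h))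
     \<and> (\<forall>n m h. emb ((T1 ^^ n) ((T2 ^^ m) h)) = PH ((W1 ^^ n) ((W2 ^^ m) (emb h))))
     \<and> (\<forall>n m h. emb ((T2 ^^ n) ((T1 ^^ m) h)) = PH ((W2 ^^ n) ((W1 ^^ m) (emb h)))))"
proof -
  obtain A1 D1 where "defect_operator T1 A1 D1" using defect_operator_exists[OF assms(1)] by blast
  moreover obtain A2 D2 where "defect_operator T2 A2 D2"
    using defect_operator_exists[OF assms(2)] by blast
  ultimately interpret twisted_contractions T1 A1 D1 T2 A2 D2 Q
    using assms(3,4) by (simp add: twisted_contractions_def twisted_contractions_axioms_def)
  obtain G G' :: "('h \<times> 'h) \<times> ('h \<times> 'h) \<Rightarrow> ('h \<times> 'h) \<times> ('h \<times> 'h)"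
    where "bop G" "bop G'" "\<forall>x y. inner (G x) y = inner x (G' y)"
    "\<forall>x. G (G' x) = x" "\<forall>x. G' (G x) = x"
    "\<forall>h. G ((D1 (A2 h), D2 h), 0) = ((D2 (A1 h), D1 h), 0)"
    using unitary_swapping_defects_exists by blast
  then have "twisted_dilation T1 A1 D1 T2 A2 D2 Q G G' q" if "cmod q = 1" for q
    using that by unfold_locales blast+
  then show ?thesis by (intro allI impI twisted_dilation.dilation_exists)
qed

end
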